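(* Let $W$ be a finite-dimensional battery system with Hamiltonian $H_W$ and let $|0\rangle_W$ be an eigenvector of $H_W$. Suppose $\mathcal{T}$ is a Thermal Operation on $SW$ (with respect to $H_S\otimes\mathbb{I}+\mathbb{I}\otimes H_W$) such that $\mathcal{T}(\rho_S\otimes|0\rangle\langle0|_W)=\gamma_S\otimes\sigma_W$ for some state $\sigma_W$ with $[\sigma_W,H_W]=0$. Then also $\mathcal{T}(\mathcal{D}(\rho_S)\otimes|0\rangle\langle0|_W)=\gamma_S\otimes\sigma_W$.
   Context: $S$ is a finite-dimensional system with Hamiltonian $H_S$, $\beta>0$, $\gamma_S=e^{-\beta H_S}/\mathrm{tr}\,e^{-\beta H_S}$. A Thermal Operation on a system $X$ with Hamiltonian $H_X$ is a channel $\mathcal{T}(\rho)=\mathrm{tr}_B[U(\rho\otimes\gamma_B)U^\dagger]$ with $B$ any finite-dimensional system, $H_B$ any Hamiltonian, $\gamma_B=e^{-\beta H_B}/\mathrm{tr}\,e^{-\beta H_B}$, and $U$ unitary with $[U,H_X\otimes\mathbb{I}+\mathbb{I}\otimes H_B]=0$. $\mathcal{D}(\rho)=\lim_{s\to\infty}\frac1s\int_0^se^{-iH_St}\rho e^{iH_St}dt$ is the dephasing map on $S$. *)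

theory Defs
  imports "HOL-Analysis.Analysis" "Jordan_Normal_Form.Schur_Decomposition" "Jordan_Normal_Form.Char_Poly"
begin

text \<open>Finite-dimensional quantum mechanics with complex matrices (Jordan_Normal_Form).
 Composite systems XB use the Kronecker ordering: index (i,k) of X (dim dX) and B (dim dB)
 corresponds to i*dB+k.\<close>

definition ctrace :: "complex mat \<Rightarrow> complex" where
  "ctrace A = (\<Sum>i<dim_row A. A $$ (i,i))"

definition hermitian_mat :: "nat \<Rightarrow> complex mat \<Rightarrow> bool" where
  "hermitian_mat n A \<longleftrightarrow> A \<in> carrier_mat n n \<and> mat_adjoint A = A"

definition unitary_mat :: "nat \<Rightarrow> complex mat \<Rightarrow> bool" where
  "unitary_mat n U \<longleftrightarrow> U \<in> carrier_mat n n \<and> mat_adjoint U * U = 1\<^sub>m n \<and> U * mat_adjoint U = 1\<^sub>m n"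

definition density_mat :: "nat \<Rightarrow> complex mat \<Rightarrow> bool" where
  "density_mat n \<rho> \<longleftrightarrow> hermitian_mat n \<rho>
     \<and> (\<forall>v \<in> carrier_vec n. 0 \<le> Re ((\<rho> *\<^sub>v v) \<bullet>c v))
     \<and> ctrace \<rho> = 1"

definition kron :: "complex mat \<Rightarrow> complex mat \<Rightarrow> complex mat" where
  "kron A B = mat (dim_row A * dim_row B) (dim_col A * dim_col B)
     (\<lambda>(i,j). A $$ (i div dim_row B, j div dim_col B) * B $$ (i mod dim_row B, j mod dim_col B))"

definition ptrace2 :: "nat \<Rightarrow> complex mat \<Rightarrow> complex mat" where
  "ptrace2 dB M = mat (dim_row M div dB) (dim_col M div dB)
     (\<lambda>(i,j). \<Sum>k<dB. M $$ (i*dB+k, j*dB+k))"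

definition proj_vec :: "complex vec \<Rightarrow> complex mat" where
  "proj_vec v = mat (dim_vec v) (dim_vec v) (\<lambda>(i,j). v $ i * cnj (v $ j))"

definition mexp :: "complex mat \<Rightarrow> complex mat" where
  "mexp A = mat (dim_row A) (dim_col A)
     (\<lambda>(i,j). \<Sum>k. (A ^\<^sub>m k) $$ (i,j) / of_nat (fact k))"

definition gibbs :: "real \<Rightarrow> complex mat \<Rightarrow> complex mat" where
  "gibbs \<beta> H = (let E = mexp ((- complex_of_real \<beta>) \<cdot>\<^sub>m H) in (1 / ctrace E) \<cdot>\<^sub>m E)"

definition thermal_op :: "real \<Rightarrow> nat \<Rightarrow> complex mat \<Rightarrow> (complex mat \<Rightarrow> complex mat) \<Rightarrow> bool" where
  "thermal_op \<beta> dX HX T \<longleftrightarrow>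
     (\<exists>dB HB U. 0 < dB \<and> hermitian_mat dB HB \<and> unitary_mat (dX * dB) U
        \<and> U * (kron HX (1\<^sub>m dB) + kron (1\<^sub>m dX) HB) = (kron HX (1\<^sub>m dB) + kron (1\<^sub>m dX) HB) * U
        \<and> (\<forall>\<rho>. density_mat dX \<rho> \<longrightarrow>
              T \<rho> = ptrace2 dB (U * kron \<rho> (gibbs \<beta> HB) * mat_adjoint U)))"

definition dephase :: "complex mat \<Rightarrow> complex mat \<Rightarrow> complex mat" where
  "dephase H \<rho> = mat (dim_row \<rho>) (dim_col \<rho>)
     (\<lambda>(i,j). Lim at_top (\<lambda>s::real. (1 / complex_of_real s) *
        integral {0..s} (\<lambda>t::real.
          (mexp ((- \<i> * complex_of_real t) \<cdot>\<^sub>m H) * \<rho> * mexp ((\<i> * complex_of_real t) \<cdot>\<^sub>m H)) $$ (i,j))))"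

end

theory Submission
  imports Defs
begin

text \<open>A state decomposes uniquely into modes, components \<open>X\<^sub>\<omega>\<close> with \<open>[H, X\<^sub>\<omega>] = \<omega> X\<^sub>\<omega>\<close>,
  and its dephased version is the mode of frequency \<open>0\<close>. A Thermal Operation is covariant under time
  translations (its dilating unitary conserves the total energy), so it maps each mode to a mode of the
  same frequency. The target \<open>\<gamma>\<^sub>S \<otimes> \<sigma>\<^sub>W\<close> commutes with the total Hamiltonian, i.e.\ it is a mode
  of frequency \<open>0\<close>. Modes of distinct frequencies are linearly independent, so the image of the
  \<open>0\<close>-mode \<open>\<D>(\<rho>\<^sub>S) \<otimes> |0\<rangle>\<langle>0|\<close> of \<open>\<rho>\<^sub>S \<otimes> |0\<rangle>\<langle>0|\<close> alone already equals \<open>\<gamma>\<^sub>S \<otimes> \<sigma>\<^sub>W\<close>.\<close>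

lemma sum_lessThan_mult: "(\<Sum>p<n*m. f p) = (\<Sum>i<n. \<Sum>k<m. f (i*m+k::nat))"
proof -
  have "(\<Sum>p<n*m. f p) = (\<Sum>i<n. sum f {i*m..<i*m+m})" by (rule sum.nat_group[symmetric])
  also have "\<dots> = (\<Sum>i<n. \<Sum>k<m. f (i*m+k))"
  proof (rule sum.cong[OF refl])
    fix i
    have "sum f {i*m..<i*m+m} = sum f {0+i*m..<m+i*m}" by (simp add: add.commute)
    also have "\<dots> = (\<Sum>k<m. f (i*m+k))" by (subst sum.shift_bounds_nat_ivl, simp add: atLeast0LessThan add.commute)
    finally show "sum f {i*m..<i*m+m} = (\<Sum>k<m. f (i*m+k))" .
  qed
  finally show ?thesis .
qed

lemma index_pair_less: "i < n \<Longrightarrow> k < (m::nat) \<Longrightarrow> i*m+k < n*m"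
proof -
  assume "i < n" "k < m"
  hence "i*m+k < i*m + m" by simp
  also have "\<dots> = (Suc i) * m" by simp
  also have "\<dots> \<le> n * m" using \<open>i<n\<close> by (intro mult_le_mono1) simp
  finally show ?thesis .
qed

lemma index_pair_decomp: "p < n*(m::nat) \<Longrightarrow> p = (p div m)*m + p mod m \<and> p div m < n \<and> p mod m < m"
  by (metis div_mult_mod_eq less_mult_imp_div_less mod_less_divisor mult.commute mult_pos_pos
        nat_0_less_mult_iff zero_less_iff_neq_zero not_less_zero)

lemma kron_carrier[simp]: "A \<in> carrier_mat a1 a2 \<Longrightarrow> B \<in> carrier_mat b1 b2 \<Longrightarrow> kron A B \<in> carrier_mat (a1*b1) (a2*b2)"
  unfolding kron_def by auto

lemma dim_kron[simp]: "dim_row (kron A B) = dim_row A * dim_row B" "dim_col (kron A B) = dim_col A * dim_col B"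
  unfolding kron_def by auto

lemma index_kron: "i < dim_row A * dim_row B \<Longrightarrow> j < dim_col A * dim_col B \<Longrightarrow>
   kron A B $$ (i,j) = A $$ (i div dim_row B, j div dim_col B) * B $$ (i mod dim_row B, j mod dim_col B)"
  unfolding kron_def by auto

lemma index_kron_pair: "i < dim_row A \<Longrightarrow> j < dim_col A \<Longrightarrow> k < dim_row B \<Longrightarrow> l < dim_col B \<Longrightarrow>
   kron A B $$ (i * dim_row B + k, j * dim_col B + l) = A $$ (i,j) * B $$ (k,l)"
  by (subst index_kron, auto intro: index_pair_less)

lemma index_kron_pair_carrier: "A \<in> carrier_mat a1 a2 \<Longrightarrow> B \<in> carrier_mat b1 b2 \<Longrightarrow> i < a1 \<Longrightarrow> j < a2 \<Longrightarrow> k < b1 \<Longrightarrow> l < b2 \<Longrightarrow>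
   kron A B $$ (i * b1 + k, j * b2 + l) = A $$ (i,j) * B $$ (k,l)"
  using index_kron_pair[of i A j k B l] by auto

lemma kron_mult:
  assumes A: "A \<in> carrier_mat a1 a2" and C: "C \<in> carrier_mat a2 a3"
    and B: "B \<in> carrier_mat b1 b2" and D: "D \<in> carrier_mat b2 b3"
  shows "kron A B * kron C D = kron (A*C) (B*D)"
proof (rule eq_matI)
  fix i j assume i: "i < dim_row (kron (A*C) (B*D))" and j: "j < dim_col (kron (A*C) (B*D))"
  from i j A B C D have i': "i < a1*b1" and j': "j < a3*b3" by auto
  from index_pair_decomp[OF i'] have id: "i div b1 < a1" "i mod b1 < b1" by auto
  from index_pair_decomp[OF j'] have jd: "j div b3 < a3" "j mod b3 < b3" by auto
  have "(kron A B * kron C D) $$ (i,j) = (\<Sum>p<a2*b2. kron A B $$ (i,p) * kron C D $$ (p,j))"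
    using i' j' A B C D by (simp add: scalar_prod_def row_def col_def atLeast0LessThan)
  also have "\<dots> = (\<Sum>x<a2. \<Sum>y<b2. kron A B $$ (i,x*b2+y) * kron C D $$ (x*b2+y,j))"
    by (rule sum_lessThan_mult)
  also have "\<dots> = (\<Sum>x<a2. \<Sum>y<b2. (A $$ (i div b1, x) * C $$ (x, j div b3)) * (B $$ (i mod b1, y) * D $$ (y, j mod b3)))"
    using A B C D i' j' by (intro sum.cong refl, subst (1 2) index_kron, auto intro: index_pair_less)
  also have "\<dots> = (A*C) $$ (i div b1, j div b3) * (B*D) $$ (i mod b1, j mod b3)"
    using A B C D id jd by (simp add: scalar_prod_def sum_product atLeast0LessThan)
  also have "\<dots> = kron (A*C) (B*D) $$ (i,j)"
    using A B C D i' j' by (subst index_kron, auto)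
  finally show "(kron A B * kron C D) $$ (i,j) = kron (A*C) (B*D) $$ (i,j)" .
qed (insert A B C D, auto)

lemma kron_smult_left: assumes "A \<in> carrier_mat a1 a2" "B \<in> carrier_mat b1 b2"
  shows "kron (c \<cdot>\<^sub>m A) B = c \<cdot>\<^sub>m kron A B"
  using assms by (intro eq_matI, auto simp: index_kron index_pair_decomp)

lemma kron_minus_left: assumes "A \<in> carrier_mat a1 a2" "A' \<in> carrier_mat a1 a2" "B \<in> carrier_mat b1 b2"
  shows "kron (A - A') B = kron A B - kron A' B"
  using assms by (intro eq_matI, auto simp: index_kron left_diff_distrib index_pair_decomp)

lemma mat_adjoint_carrier[simp]: "A \<in> carrier_mat n m \<Longrightarrow> mat_adjoint A \<in> carrier_mat m n"
  unfolding mat_adjoint_def by (auto simp: mat_of_rows_def)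

lemma dim_mat_adjoint[simp]: "dim_row (mat_adjoint A) = dim_col A" "dim_col (mat_adjoint A) = dim_row A"
  unfolding mat_adjoint_def by (auto simp: mat_of_rows_def)

lemma index_mat_adjoint[simp]: "i < dim_col A \<Longrightarrow> j < dim_row A \<Longrightarrow> mat_adjoint A $$ (i,j) = cnj (A $$ (j,i))"
  unfolding mat_adjoint_def by (auto simp: mat_of_rows_def)

lemma mat_adjoint_mat_adjoint[simp]: "mat_adjoint (mat_adjoint A) = (A :: complex mat)"
  by (rule eq_matI, auto simp: index_mat_adjoint)

lemma mat_adjoint_mult: fixes A B :: "complex mat" assumes "A \<in> carrier_mat n m" "B \<in> carrier_mat m k"
  shows "mat_adjoint (A * B) = mat_adjoint B * mat_adjoint A"
proof (rule eq_matI)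
  fix i j assume "i < dim_row (mat_adjoint B * mat_adjoint A)" "j < dim_col (mat_adjoint B * mat_adjoint A)"
  with assms have i: "i < k" and j: "j < n" by auto
  show "mat_adjoint (A * B) $$ (i, j) = (mat_adjoint B * mat_adjoint A) $$ (i, j)"
    using assms i j by (auto simp: scalar_prod_def sum_conjugate mult.commute intro!: sum.cong)
qed (insert assms, auto)

lemma mat_adjoint_one[simp]: "mat_adjoint (1\<^sub>m n) = (1\<^sub>m n :: complex mat)"
proof (rule eq_matI)
  fix i j assume "i < dim_row (1\<^sub>m n :: complex mat)" "j < dim_col (1\<^sub>m n :: complex mat)"
  hence "i < n" "j < n" by auto
  thus "mat_adjoint (1\<^sub>m n) $$ (i, j) = (1\<^sub>m n :: complex mat) $$ (i, j)" by (subst index_mat_adjoint, auto)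
qed auto

lemma hermitian_matD: "hermitian_mat n A \<Longrightarrow> i < n \<Longrightarrow> j < n \<Longrightarrow> cnj (A $$ (j,i)) = A $$ (i,j)"
  unfolding hermitian_mat_def by (metis index_mat_adjoint carrier_matD)

lemma hermitian_matI: "A \<in> carrier_mat n n \<Longrightarrow> (\<And>i j. i < n \<Longrightarrow> j < n \<Longrightarrow> cnj (A $$ (j,i)) = A $$ (i,j)) \<Longrightarrow> hermitian_mat n A"
  unfolding hermitian_mat_def by (auto intro!: eq_matI)

lemma unitary_mat_mult: assumes "unitary_mat n U" "unitary_mat n V" shows "unitary_mat n (U * V)"
proof -
  from assms have U: "U \<in> carrier_mat n n" and V: "V \<in> carrier_mat n n"
    and u1: "mat_adjoint U * U = 1\<^sub>m n" and u2: "U * mat_adjoint U = 1\<^sub>m n"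
    and v1: "mat_adjoint V * V = 1\<^sub>m n" and v2: "V * mat_adjoint V = 1\<^sub>m n"
    unfolding unitary_mat_def by auto
  have "mat_adjoint (U*V) * (U*V) = (mat_adjoint V * mat_adjoint U) * (U * V)"
    using U V by (simp add: mat_adjoint_mult)
  also have "\<dots> = mat_adjoint V * (mat_adjoint U * (U * V))"
    using U V by (intro assoc_mult_mat[of _ n n _ n _ n], auto)
  also have "mat_adjoint U * (U * V) = (mat_adjoint U * U) * V"
    using U V by (intro assoc_mult_mat[of _ n n _ n _ n, symmetric], auto)
  also have "\<dots> = V" using u1 V by simp
  finally have 1: "mat_adjoint (U*V) * (U*V) = 1\<^sub>m n" using v1 by simp
  have "(U*V) * mat_adjoint (U*V) = (U * V) * (mat_adjoint V * mat_adjoint U)"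
    using U V by (simp add: mat_adjoint_mult)
  also have "\<dots> = U * (V * (mat_adjoint V * mat_adjoint U))"
    using U V by (intro assoc_mult_mat[of _ n n _ n _ n], auto)
  also have "V * (mat_adjoint V * mat_adjoint U) = (V * mat_adjoint V) * mat_adjoint U"
    using U V by (intro assoc_mult_mat[of _ n n _ n _ n, symmetric], auto)
  also have "\<dots> = mat_adjoint U" using v2 U by simp
  finally show ?thesis using 1 U V u2 unfolding unitary_mat_def by auto
qed

lemma index_conj_diag: assumes "V \<in> carrier_mat n n" "i < n" "j < n"
  shows "(V * mat_diag n f * mat_adjoint V) $$ (i,j) = (\<Sum>a<n. V $$ (i,a) * f a * cnj (V $$ (j,a)))"
  using assms by (simp add: mat_diag_mult_right scalar_prod_def atLeast0LessThan)

section \<open>Spectral theorem\<close>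

lemma cscalar_prod_sum: "v \<in> carrier_vec n \<Longrightarrow> w \<in> carrier_vec n \<Longrightarrow> v \<bullet>c w = (\<Sum>i<n. v $ i * cnj (w $ i))"
  by (auto simp: scalar_prod_def atLeast0LessThan)

lemma mult_cnj_self: "z * cnj z = complex_of_real ((cmod z)^2)"
  using complex_norm_square by (simp add: mult.commute)

lemma sum_mult_cnj_eq_0D: assumes "(\<Sum>i<n. u i * cnj (u i)) = (0::complex)" "i < (n::nat)" shows "u i = 0"
proof -
  have "(\<Sum>i<n. u i * cnj (u i)) = complex_of_real (\<Sum>i<n. (cmod (u i))^2)"
    by (simp add: mult_cnj_self)
  with assms have "complex_of_real (\<Sum>i<n. (cmod (u i))^2) = 0" by simp
  hence "(\<Sum>i<n. (cmod (u i))^2) = 0" by (simp only: of_real_eq_0_iff)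
  moreover have "(cmod (u i))^2 \<le> (\<Sum>i<n. (cmod (u i))^2)"
    by (rule member_le_sum, insert assms, auto)
  ultimately have "(cmod (u i))^2 \<le> 0" by simp
  thus ?thesis by (metis norm_eq_zero power2_less_eq_zero_iff)
qed

lemma unit_eigenvector_exists: fixes A :: "complex mat" assumes A: "A \<in> carrier_mat (Suc m) (Suc m)"
  shows "\<exists>v lam. v \<in> carrier_vec (Suc m) \<and> v \<bullet>c v = 1 \<and> A *\<^sub>v v = lam \<cdot>\<^sub>v v"
proof -
  obtain as where cp: "char_poly A = (\<Prod> a \<leftarrow> as. [:- a, 1:])" and len: "length as = Suc m"
    using char_poly_factorized[OF A] by blast
  then obtain a rest where as: "as = a # rest" by (cases as, auto)
  have "poly (char_poly A) a = 0" unfolding cp as by (simp add: poly_prod_list)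
  hence "eigenvalue A a" using eigenvalue_root_char_poly[OF A] by simp
  then obtain w where ev: "eigenvector A w a" unfolding eigenvalue_def by blast
  hence w: "w \<in> carrier_vec (Suc m)" and w0: "w \<noteq> 0\<^sub>v (Suc m)" and Aw: "A *\<^sub>v w = a \<cdot>\<^sub>v w"
    using A unfolding eigenvector_def by auto
  have pos: "w \<bullet>c w > 0" using w w0 by simp
  define r where "r = Re (w \<bullet>c w)"
  have r: "r > 0" "w \<bullet>c w = complex_of_real r" using pos unfolding r_def
    by (auto simp: less_complex_def complex_eq_iff)
  define v where "v = (1 / complex_of_real (sqrt r)) \<cdot>\<^sub>v w"
  have v: "v \<in> carrier_vec (Suc m)" using w unfolding v_def by auto
  have "v \<bullet>c v = (1 / complex_of_real (sqrt r)) * cnj (1 / complex_of_real (sqrt r)) * (w \<bullet>c w)"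
    unfolding v_def using w by (simp add: conjugate_smult_vec)
  also have "\<dots> = 1" using r by (simp add: field_simps power2_eq_square[symmetric] flip: of_real_power)
  finally have vv: "v \<bullet>c v = 1" .
  have "A *\<^sub>v v = a \<cdot>\<^sub>v v" unfolding v_def using A w Aw
    by (simp add: mult_mat_vec smult_smult_assoc mult.commute)
  with v vv show ?thesis by blast
qed

lemma sum_delta_lessThan: "(\<Sum>k<n. (if k = j then f k else 0)) = (if j < (n::nat) then f j else (0::complex))"
  by (simp add: sum.delta')

lemma sum_mult_delta_lessThan: "(\<Sum>b<n. c b * (if a = b then 1 else 0)) = (if a < (n::nat) then c a else (0::complex))"
  by (simp add: sum.delta if_distrib[where f = "\<lambda>x. _ * x"] cong: if_cong)

lemma sum_mult_delta_lessThan': "(\<Sum>b<n. c b * (if b = a then 1 else 0)) = (if a < (n::nat) then c a else (0::complex))"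
  by (induction n) (auto simp: less_Suc_eq)

lemma unitary_matD: "unitary_mat n U \<Longrightarrow> U \<in> carrier_mat n n"
  "unitary_mat n U \<Longrightarrow> mat_adjoint U * U = 1\<^sub>m n" "unitary_mat n U \<Longrightarrow> U * mat_adjoint U = 1\<^sub>m n"
  unfolding unitary_mat_def by auto

lemma unitary_adjoint_mult_cancel: assumes "unitary_mat n U" "X \<in> carrier_mat n k" shows "mat_adjoint U * (U * X) = X"
proof -
  have "mat_adjoint U * (U * X) = (mat_adjoint U * U) * X"
    using unitary_matD[OF assms(1)] assms(2) by (intro assoc_mult_mat[symmetric], auto)
  thus ?thesis using unitary_matD[OF assms(1)] assms(2) by simp
qed

lemma unitary_mult_adjoint_cancel: assumes "unitary_mat n U" "X \<in> carrier_mat n k" shows "U * (mat_adjoint U * X) = X"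
proof -
  have "U * (mat_adjoint U * X) = (U * mat_adjoint U) * X"
    using unitary_matD[OF assms(1)] assms(2) by (intro assoc_mult_mat[symmetric], auto)
  thus ?thesis using unitary_matD[OF assms(1)] assms(2) by simp
qed

lemma unitary_cols_orthonormal: assumes "unitary_mat n U" "i < n" "j < n"
  shows "(\<Sum>k<n. cnj (U $$ (k,i)) * U $$ (k,j)) = (if i = j then 1 else 0)"
proof -
  have "(mat_adjoint U * U) $$ (i,j) = (\<Sum>k<n. cnj (U $$ (k,i)) * U $$ (k,j))"
    using unitary_matD(1)[OF assms(1)] assms(2,3) by (simp add: scalar_prod_def atLeast0LessThan)
  thus ?thesis using unitary_matD(2)[OF assms(1)] assms(2,3) index_one_mat(1) by metis
qed

lemma unitary_rows_orthonormal: assumes "unitary_mat n U" "i < n" "j < n"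
  shows "(\<Sum>k<n. U $$ (i,k) * cnj (U $$ (j,k))) = (if i = j then 1 else 0)"
proof -
  have "(U * mat_adjoint U) $$ (i,j) = (\<Sum>k<n. U $$ (i,k) * cnj (U $$ (j,k)))"
    using unitary_matD(1)[OF assms(1)] assms(2,3) by (simp add: scalar_prod_def atLeast0LessThan)
  thus ?thesis using unitary_matD(3)[OF assms(1)] assms(2,3) index_one_mat(1) by metis
qed

lemma unitary_mat_hermitian_involution:
  assumes "hermitian_mat n R" "R * R = 1\<^sub>m n"
  shows "unitary_mat n R"
  using assms unfolding hermitian_mat_def unitary_mat_def by auto

lemma unitary_mat_smult:
  assumes U: "unitary_mat n U" and c: "c * cnj c = 1"
  shows "unitary_mat n (c \<cdot>\<^sub>m U)"
proof -
  have Uc: "U \<in> carrier_mat n n" using unitary_matD[OF U] by simp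
  have "mat_adjoint (c \<cdot>\<^sub>m U) = cnj c \<cdot>\<^sub>m mat_adjoint U" by (intro eq_matI) auto
  moreover have "(a \<cdot>\<^sub>m A) * (b \<cdot>\<^sub>m B) = (a * b) \<cdot>\<^sub>m (A * B)"
    if "A \<in> carrier_mat n n" "B \<in> carrier_mat n n" for a b :: complex and A B
    using that mult_smult_assoc_mat[OF that(1) smult_carrier_mat[OF that(2)], of a b]
      mult_smult_distrib[OF that, of b] by (auto intro!: eq_matI)
  moreover have "1 \<cdot>\<^sub>m 1\<^sub>m n = (1\<^sub>m n :: complex mat)" by (intro eq_matI) auto
  ultimately show ?thesis
    using Uc unitary_matD[OF U] c unfolding unitary_mat_def by (simp add: mult.commute)
qed

definition householder_mat :: "nat \<Rightarrow> complex \<Rightarrow> (nat \<Rightarrow> complex) \<Rightarrow> complex mat" where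
  "householder_mat n a u = mat n n (\<lambda>(i,j). (if i = j then 1 else 0) - a * u i * cnj (u j))"

lemma unitary_householder_mat:
  assumes a: "cnj a = a" and s: "a * a * (\<Sum>i<n. u i * cnj (u i)) = 2 * a"
  shows "unitary_mat n (householder_mat n a u)"
proof (rule unitary_mat_hermitian_involution)
  let ?R = "householder_mat n a u" and ?s = "\<Sum>i<n. u i * cnj (u i)"
  show "hermitian_mat n ?R" using a unfolding householder_mat_def by (intro hermitian_matI) auto
  show "?R * ?R = 1\<^sub>m n"
  proof (rule eq_matI)
    fix i j assume "i < dim_row (1\<^sub>m n :: complex mat)" "j < dim_col (1\<^sub>m n :: complex mat)"
    hence ij: "i < n" "j < n" by auto
    have "(?R * ?R) $$ (i,j) = (\<Sum>k<n. ?R $$ (i,k) * ?R $$ (k,j))"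
      using ij unfolding householder_mat_def by (simp add: scalar_prod_def atLeast0LessThan)
    also have "\<dots> = (\<Sum>k<n. (if k = j then (if i = k then 1 else 0) else 0)
        - (if k = j then a * u i * cnj (u k) else 0) - (if k = i then a * u k * cnj (u j) else 0)
        + a * a * u i * cnj (u j) * (u k * cnj (u k)))"
      using ij unfolding householder_mat_def by (intro sum.cong refl) (auto simp: algebra_simps)
    also have "\<dots> = (if i = j then 1 else 0) + u i * cnj (u j) * (a * a * ?s - 2 * a)"
      unfolding sum.distrib sum_subtractf sum_delta_lessThan sum_distrib_left[symmetric] using ij
      by (simp add: algebra_simps)
    finally show "(?R * ?R) $$ (i,j) = 1\<^sub>m n $$ (i,j)" using s ij by simp
  qed (auto simp: householder_mat_def)
qed

text \<open>A phase times the Householder reflection that swaps \<open>e\<^sub>0\<close> with \<open>v\<close> up to that phase.\<close>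

lemma unitary_with_first_col:
  fixes v :: "complex vec" assumes v: "v \<in> carrier_vec n" "v \<bullet>c v = 1" and n: "0 < n"
  shows "\<exists>W. unitary_mat n W \<and> (\<forall>i<n. W $$ (i,0) = v $ i)"
proof -
  define nv where "nv = cmod (v$0)"
  define c where "c = (if v$0 = 0 then 1 else v$0 / complex_of_real nv)"
  have c1: "c * cnj c = 1"
    unfolding c_def nv_def by (auto simp: mult_cnj_self norm_divide)
  have cv: "c * cnj (v$0) = complex_of_real nv" "cnj c * v$0 = complex_of_real nv"
    unfolding c_def nv_def by (auto simp: mult_cnj_self power2_eq_square mult.commute)
  define u where "u = (\<lambda>i. (if i = 0 then c else 0) - v$i)"
  define s where "s = (\<Sum>i<n. u i * cnj (u i))"
  have vv: "(\<Sum>i<n. v$i * cnj(v$i)) = 1" using v cscalar_prod_sum[OF v(1) v(1)] by simp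
  have pt: "u i * cnj (u i) = (if i = 0 then 1 - 2 * complex_of_real nv else 0) + v$i * cnj(v$i)" for i
    unfolding u_def using c1 cv by (auto simp: algebra_simps)
  have s_eq: "s = 2 - 2 * complex_of_real nv"
    unfolding s_def pt sum.distrib vv using n by (simp add: sum.delta)
  define a where "a = 2 / s"
  define W where "W = c \<cdot>\<^sub>m householder_mat n a u"
  have "a * a * s = 2 * a" unfolding a_def by (cases "s = 0") (simp_all add: field_simps)
  hence "unitary_mat n (householder_mat n a u)"
    by (intro unitary_householder_mat) (auto simp: a_def s_eq s_def[symmetric])
  hence "unitary_mat n W" unfolding W_def using c1 by (rule unitary_mat_smult)
  moreover have "W $$ (i,0) = v $ i" if i: "i < n" for i
  proof -
    have "W $$ (i,0) = c * (if i = 0 then 1 else 0) - a * (c * cnj (u 0)) * u i"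
      using i n unfolding W_def householder_mat_def by (auto simp: algebra_simps)
    also have "c * cnj (u 0) = 1 - complex_of_real nv" unfolding u_def using c1 cv by (simp add: algebra_simps)
    finally have W0: "W $$ (i,0) = c * (if i = 0 then 1 else 0) - a * (1 - complex_of_real nv) * u i" .
    show ?thesis
    proof (cases "s = 0")
      case True
      hence "u i = 0" using sum_mult_cnj_eq_0D[of u n i] i unfolding s_def by simp
      thus ?thesis using W0 unfolding u_def by (auto split: if_splits)
    next
      case False
      hence "a * (1 - complex_of_real nv) = 1" unfolding a_def s_eq by (auto simp: field_simps)
      thus ?thesis using W0 unfolding u_def by auto
    qed
  qed
  ultimately show ?thesis by blast
qed

definition corner_block :: "complex \<Rightarrow> complex mat \<Rightarrow> complex mat" where
  "corner_block a A = mat (Suc (dim_row A)) (Suc (dim_col A))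
     (\<lambda>(i,j). if i = 0 \<and> j = 0 then a else if i = 0 \<or> j = 0 then 0 else A $$ (i - 1, j - 1))"

lemma dim_corner_block[simp]:
  "dim_row (corner_block a A) = Suc (dim_row A)" "dim_col (corner_block a A) = Suc (dim_col A)"
  unfolding corner_block_def by auto

lemma corner_block_carrier[simp]: "A \<in> carrier_mat m k \<Longrightarrow> corner_block a A \<in> carrier_mat (Suc m) (Suc k)"
  unfolding corner_block_def by auto

lemma corner_block_mult:
  assumes A: "A \<in> carrier_mat m k" and B: "B \<in> carrier_mat k l"
  shows "corner_block a A * corner_block b B = corner_block (a * b) (A * B)"
proof (rule eq_matI)
  fix i j assume "i < dim_row (corner_block (a * b) (A * B))" "j < dim_col (corner_block (a * b) (A * B))"
  hence ij: "i < Suc m" "j < Suc l" using A B by (auto simp: corner_block_def)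
  have "(corner_block a A * corner_block b B) $$ (i,j) =
      (\<Sum>p<Suc k. corner_block a A $$ (i,p) * corner_block b B $$ (p,j))"
    using A B ij by (simp add: scalar_prod_def atLeast0LessThan del: sum.lessThan_Suc)
  also have "\<dots> = corner_block a A $$ (i,0) * corner_block b B $$ (0,j) +
      (\<Sum>p<k. corner_block a A $$ (i, Suc p) * corner_block b B $$ (Suc p, j))"
    by (rule sum.lessThan_Suc_shift)
  also have "\<dots> = corner_block (a * b) (A * B) $$ (i,j)"
    using A B ij by (cases i; cases j) (auto simp: corner_block_def scalar_prod_def atLeast0LessThan)
  finally show "(corner_block a A * corner_block b B) $$ (i,j) = corner_block (a * b) (A * B) $$ (i,j)" .
qed (use A B in \<open>auto simp: corner_block_def\<close>)

lemma mat_adjoint_corner_block: "mat_adjoint (corner_block a A) = corner_block (cnj a) (mat_adjoint A)"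
  by (intro eq_matI) (auto simp: corner_block_def)

lemma corner_block_one: "corner_block 1 (1\<^sub>m m) = 1\<^sub>m (Suc m)"
  by (intro eq_matI) (auto simp: corner_block_def)

lemma corner_block_mat_diag: "corner_block a (mat_diag m f) = mat_diag (Suc m) (\<lambda>i. if i = 0 then a else f (i - 1))"
  by (intro eq_matI) (auto simp: corner_block_def mat_diag_def)

lemma unitary_corner_block: assumes "unitary_mat m V" shows "unitary_mat (Suc m) (corner_block 1 V)"
proof -
  have V: "V \<in> carrier_mat m m" using unitary_matD[OF assms] by simp
  show ?thesis
    using unitary_matD[OF assms] corner_block_mult[OF V mat_adjoint_carrier[OF V]]
      corner_block_mult[OF mat_adjoint_carrier[OF V] V]
    by (simp add: unitary_mat_def mat_adjoint_corner_block corner_block_one)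
qed

lemma hermitian_mat_sandwich:
  assumes V: "V \<in> carrier_mat n n" and X: "hermitian_mat n X"
  shows "hermitian_mat n (V * X * mat_adjoint V)"
proof -
  have Xc: "X \<in> carrier_mat n n" and Xh: "mat_adjoint X = X" using X unfolding hermitian_mat_def by auto
  have "mat_adjoint (V * X * mat_adjoint V) = mat_adjoint (mat_adjoint V) * mat_adjoint (V * X)"
    using V Xc by (intro mat_adjoint_mult[of _ n n _ n]) auto
  also have "mat_adjoint (V * X) = mat_adjoint X * mat_adjoint V"
    using V Xc by (intro mat_adjoint_mult[of _ n n _ n]) auto
  also have "mat_adjoint (mat_adjoint V) * (mat_adjoint X * mat_adjoint V) = V * X * mat_adjoint V"
    unfolding Xh mat_adjoint_mat_adjoint using V Xc by (intro assoc_mult_mat[of _ n n _ n _ n, symmetric]) auto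
  finally show ?thesis unfolding hermitian_mat_def using V Xc by (simp add: mult_carrier_mat[of _ n n _ n])
qed

lemma unitary_conj_adjoint_conj:
  assumes U: "unitary_mat n U" and H: "H \<in> carrier_mat n n"
  shows "U * (mat_adjoint U * H * U) * mat_adjoint U = H"
proof -
  have Uc: "U \<in> carrier_mat n n" "mat_adjoint U \<in> carrier_mat n n" using unitary_matD[OF U] by auto
  have "U * (mat_adjoint U * H * U) * mat_adjoint U = U * (mat_adjoint U * (H * (U * mat_adjoint U)))"
    using Uc H by (simp add: assoc_mult_mat[of _ n n _ n _ n] mult_carrier_mat[of _ n n _ n])
  also have "\<dots> = H" using H unitary_mult_adjoint_cancel[OF U H] unitary_matD(3)[OF U] by simp
  finally show ?thesis .
qed

lemma hermitian_mat_corner_block: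
  assumes K: "hermitian_mat (Suc m) K" and col: "\<And>i. 0 < i \<Longrightarrow> i < Suc m \<Longrightarrow> K $$ (i,0) = 0"
  defines "K' \<equiv> mat m m (\<lambda>(i,j). K $$ (Suc i, Suc j))"
  shows "K = corner_block (complex_of_real (Re (K $$ (0,0)))) K'" and "hermitian_mat m K'"
proof -
  have Kc: "K \<in> carrier_mat (Suc m) (Suc m)" using K unfolding hermitian_mat_def by simp
  note Kh = hermitian_matD[OF K]
  have "K $$ (0,0) = complex_of_real (Re (K $$ (0,0)))" using Kh[of 0 0] by (simp add: complex_eq_iff)
  moreover have "K $$ (0,j) = 0" if "0 < j" "j < Suc m" for j using Kh[OF _ that(2), of 0] col[OF that] by simp
  ultimately show "K = corner_block (complex_of_real (Re (K $$ (0,0)))) K'"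
    using Kc col unfolding K'_def corner_block_def by (intro eq_matI) (auto simp: not0_implies_Suc)
  show "hermitian_mat m K'" unfolding K'_def by (rule hermitian_matI) (auto simp: Kh)
qed

text \<open>Deflation: conjugating by a unitary whose first column is a unit eigenvector splits off that eigenvalue.\<close>

lemma hermitian_deflation:
  fixes H :: "complex mat" assumes "hermitian_mat (Suc m) H"
  shows "\<exists>W e H'. unitary_mat (Suc m) W \<and> hermitian_mat m H' \<and>
           H = W * corner_block (complex_of_real e) H' * mat_adjoint W"
proof -
  let ?n = "Suc m"
  have H: "H \<in> carrier_mat ?n ?n" using assms unfolding hermitian_mat_def by auto
  obtain v lam where v: "v \<in> carrier_vec ?n" "v \<bullet>c v = 1" and Hv: "H *\<^sub>v v = lam \<cdot>\<^sub>v v"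
    using unit_eigenvector_exists[OF H] by blast
  obtain W where Wu: "unitary_mat ?n W" and Wc: "\<And>i. i < ?n \<Longrightarrow> W $$ (i,0) = v $ i"
    using unitary_with_first_col[OF v] by blast
  have W: "W \<in> carrier_mat ?n ?n" using unitary_matD[OF Wu] by auto
  define K where "K = mat_adjoint W * H * W"
  have colW: "col W 0 = v" using W v Wc by (intro eq_vecI) auto
  have HW0: "(H * W) $$ (p,0) = lam * W $$ (p,0)" if p: "p < ?n" for p
  proof -
    have "(H * W) $$ (p,0) = (H *\<^sub>v col W 0) $ p" using p H W by simp
    also have "\<dots> = lam * W $$ (p,0)" unfolding colW Hv using p v Wc by simp
    finally show ?thesis .
  qed
  have "K $$ (i,0) = 0" if i: "0 < i" "i < ?n" for i
  proof -
    have "K $$ (i,0) = (\<Sum>p<?n. cnj (W $$ (p,i)) * (H * W) $$ (p,0))"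
      unfolding K_def using i W H by (simp add: assoc_mult_mat[of _ ?n ?n _ ?n _ ?n] scalar_prod_def atLeast0LessThan)
    also have "\<dots> = lam * (\<Sum>p<?n. cnj (W $$ (p,i)) * W $$ (p,0))"
      by (simp add: HW0 sum_distrib_left algebra_simps)
    finally show ?thesis using unitary_cols_orthonormal[OF Wu i(2), of 0] i by simp
  qed
  moreover have "hermitian_mat ?n K"
    using hermitian_mat_sandwich[OF mat_adjoint_carrier[OF W] assms] unfolding K_def by simp
  ultimately show ?thesis
    using hermitian_mat_corner_block unitary_conj_adjoint_conj[OF Wu H, folded K_def] Wu by metis
qed

theorem hermitian_spectral_decomposition:
  fixes H :: "complex mat" assumes "hermitian_mat n H"
  shows "\<exists>V \<mu>. unitary_mat n V \<and> H = V * mat_diag n (\<lambda>i. complex_of_real (\<mu> i)) * mat_adjoint V"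
  using assms
proof (induction n arbitrary: H)
  case 0
  hence "H = 1\<^sub>m 0 * mat_diag 0 (\<lambda>i. complex_of_real ((\<lambda>_. 0) i)) * mat_adjoint (1\<^sub>m 0)"
    unfolding hermitian_mat_def by (intro eq_matI) auto
  moreover have "unitary_mat 0 (1\<^sub>m 0)" unfolding unitary_mat_def by auto
  ultimately show ?case by (intro exI conjI)
next
  case (Suc m)
  obtain W e H' where W: "unitary_mat (Suc m) W" and H': "hermitian_mat m H'"
    and H: "H = W * corner_block (complex_of_real e) H' * mat_adjoint W"
    using hermitian_deflation[OF Suc.prems] by blast
  obtain V \<mu> where V: "unitary_mat m V" and H'_eq: "H' = V * mat_diag m (\<lambda>i. complex_of_real (\<mu> i)) * mat_adjoint V"
    using Suc.IH[OF H'] by blast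
  have Wc: "W \<in> carrier_mat (Suc m) (Suc m)" and Vc: "V \<in> carrier_mat m m"
    using unitary_matD[OF W] unitary_matD[OF V] by auto
  define E where "E = corner_block 1 V"
  define \<mu>' where "\<mu>' i = (if i = 0 then e else \<mu> (i - 1))" for i
  define D where "D = mat_diag (Suc m) (\<lambda>i. complex_of_real (\<mu>' i))"
  have Ec: "E \<in> carrier_mat (Suc m) (Suc m)" and Dc: "D \<in> carrier_mat (Suc m) (Suc m)"
    unfolding E_def D_def using Vc by auto
  have "D = corner_block (complex_of_real e) (mat_diag m (\<lambda>i. complex_of_real (\<mu> i)))"
    unfolding D_def corner_block_mat_diag by (rule arg_cong[where f = "mat_diag (Suc m)"]) (auto simp: \<mu>'_def)
  hence EDE: "E * D * mat_adjoint E = corner_block (complex_of_real e) H'"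
    unfolding E_def H'_eq mat_adjoint_corner_block
    using corner_block_mult[OF Vc mat_diag_dim] Vc
      corner_block_mult[OF mult_carrier_mat[OF Vc mat_diag_dim] mat_adjoint_carrier[OF Vc]] by simp
  have "H = (W * E) * D * mat_adjoint (W * E)"
    unfolding H EDE[symmetric] using Wc Ec Dc
    by (simp add: mat_adjoint_mult[OF Wc Ec] assoc_mult_mat[of _ "Suc m" "Suc m" _ "Suc m" _ "Suc m"]
        mult_carrier_mat[of _ "Suc m" "Suc m" _ "Suc m"])
  moreover have "unitary_mat (Suc m) (W * E)" unfolding E_def by (rule unitary_mat_mult[OF W unitary_corner_block[OF V]])
  ultimately show ?case unfolding D_def by blast
qed

definition unitary_diag :: "nat \<Rightarrow> complex mat \<Rightarrow> (nat \<Rightarrow> complex) \<Rightarrow> complex mat" where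
  "unitary_diag n V f = V * mat_diag n f * mat_adjoint V"

lemma unitary_diag_carrier[simp]: "V \<in> carrier_mat n n \<Longrightarrow> unitary_diag n V f \<in> carrier_mat n n"
  unfolding unitary_diag_def by auto

lemma dim_unitary_diag[simp]: "dim_row (unitary_diag n V f) = dim_row V" "dim_col (unitary_diag n V f) = dim_row V"
  unfolding unitary_diag_def by auto

lemma index_unitary_diag: "V \<in> carrier_mat n n \<Longrightarrow> i < n \<Longrightarrow> j < n \<Longrightarrow>
  unitary_diag n V f $$ (i,j) = (\<Sum>a<n. V $$ (i,a) * f a * cnj (V $$ (j,a)))"
  unfolding unitary_diag_def by (rule index_conj_diag)

lemma unitary_diag_mult: assumes U: "unitary_mat n V"
  shows "unitary_diag n V f * unitary_diag n V g = unitary_diag n V (\<lambda>a. f a * g a)"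
proof (rule eq_matI)
  have V: "V \<in> carrier_mat n n" using unitary_matD[OF U] by auto
  fix i j assume "i < dim_row (unitary_diag n V (\<lambda>a. f a * g a))" "j < dim_col (unitary_diag n V (\<lambda>a. f a * g a))"
  hence ij: "i < n" "j < n" using V by (auto simp: carrier_matD)
  have "(unitary_diag n V f * unitary_diag n V g) $$ (i,j) = (\<Sum>p<n. unitary_diag n V f $$ (i,p) * unitary_diag n V g $$ (p,j))"
    using V ij by (simp add: scalar_prod_def atLeast0LessThan)
  also have "\<dots> = (\<Sum>p<n. (\<Sum>a<n. V $$ (i,a) * f a * cnj (V $$ (p,a))) * (\<Sum>b<n. V $$ (p,b) * g b * cnj (V $$ (j,b))))"
    using V ij by (intro sum.cong refl, simp add: index_unitary_diag)
  also have "\<dots> = (\<Sum>p<n. \<Sum>a<n. \<Sum>b<n. (V $$ (i,a) * f a * g b * cnj (V $$ (j,b))) * (cnj (V $$ (p,a)) * V $$ (p,b)))"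
    by (simp add: sum_product algebra_simps)
  also have "\<dots> = (\<Sum>a<n. \<Sum>b<n. \<Sum>p<n. (V $$ (i,a) * f a * g b * cnj (V $$ (j,b))) * (cnj (V $$ (p,a)) * V $$ (p,b)))"
    by (subst sum.swap, rule sum.cong[OF refl], subst sum.swap, rule refl)
  also have "\<dots> = (\<Sum>a<n. \<Sum>b<n. (V $$ (i,a) * f a * g b * cnj (V $$ (j,b))) * (if a = b then 1 else 0))"
    by (intro sum.cong refl, simp add: sum_distrib_left[symmetric] unitary_cols_orthonormal[OF U])
  also have "\<dots> = (\<Sum>a<n. V $$ (i,a) * (f a * g a) * cnj (V $$ (j,a)))"
    by (intro sum.cong refl, subst sum_mult_delta_lessThan, simp)
  also have "\<dots> = unitary_diag n V (\<lambda>a. f a * g a) $$ (i,j)" using V ij by (simp add: index_unitary_diag)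
  finally show "(unitary_diag n V f * unitary_diag n V g) $$ (i,j) = unitary_diag n V (\<lambda>a. f a * g a) $$ (i,j)" .
qed (insert unitary_matD[OF assms], auto simp: carrier_matD)

lemma unitary_diag_smult: assumes "V \<in> carrier_mat n n" shows "c \<cdot>\<^sub>m unitary_diag n V f = unitary_diag n V (\<lambda>a. c * f a)"
  using assms by (intro eq_matI, auto simp: index_unitary_diag sum_distrib_left algebra_simps carrier_matD)

lemma unitary_diag_one: assumes U: "unitary_mat n V" shows "unitary_diag n V (\<lambda>a. 1) = 1\<^sub>m n"
  using unitary_matD[OF U] by (intro eq_matI, auto simp: index_unitary_diag unitary_rows_orthonormal[OF U] carrier_matD)

lemma unitary_diag_power: assumes U: "unitary_mat n V" shows "unitary_diag n V f ^\<^sub>m k = unitary_diag n V (\<lambda>a. f a ^ k)"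
proof (induction k)
  case 0 thus ?case using unitary_diag_one[OF U] unitary_matD[OF U] by (simp add: carrier_matD)
next
  case (Suc k) thus ?case by (simp add: unitary_diag_mult[OF U] mult.commute)
qed

lemma mexp_unitary_diag: assumes U: "unitary_mat n V" shows "mexp (unitary_diag n V f) = unitary_diag n V (\<lambda>a. exp (f a))"
proof (rule eq_matI)
  have V: "V \<in> carrier_mat n n" using unitary_matD[OF U] by auto
  fix i j assume "i < dim_row (unitary_diag n V (\<lambda>a. exp (f a)))" "j < dim_col (unitary_diag n V (\<lambda>a. exp (f a)))"
  hence ij: "i < n" "j < n" using V by (auto simp: carrier_matD)
  have "(\<lambda>k. (unitary_diag n V f ^\<^sub>m k) $$ (i,j) / of_nat (fact k)) =
     (\<lambda>k. \<Sum>a<n. V $$ (i,a) * cnj (V $$ (j,a)) * (f a ^ k /\<^sub>R fact k))"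
    using V ij by (auto simp: unitary_diag_power[OF U] index_unitary_diag sum_divide_distrib scaleR_conv_of_real divide_inverse algebra_simps sum_distrib_left)
  moreover have "(\<lambda>k. \<Sum>a<n. V $$ (i,a) * cnj (V $$ (j,a)) * (f a ^ k /\<^sub>R fact k)) sums
      (\<Sum>a<n. V $$ (i,a) * cnj (V $$ (j,a)) * exp (f a))"
    by (intro sums_sum sums_mult exp_converges)
  ultimately have "(\<lambda>k. (unitary_diag n V f ^\<^sub>m k) $$ (i,j) / of_nat (fact k)) sums
      (\<Sum>a<n. V $$ (i,a) * cnj (V $$ (j,a)) * exp (f a))" by simp
  hence "(\<Sum>k. (unitary_diag n V f ^\<^sub>m k) $$ (i,j) / of_nat (fact k)) = (\<Sum>a<n. V $$ (i,a) * cnj (V $$ (j,a)) * exp (f a))"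
    by (rule sums_unique[symmetric])
  thus "mexp (unitary_diag n V f) $$ (i,j) = unitary_diag n V (\<lambda>a. exp (f a)) $$ (i,j)"
    unfolding mexp_def using V ij by (simp add: index_unitary_diag algebra_simps)
qed (insert unitary_matD[OF assms], auto simp: mexp_def carrier_matD)

lemma gibbs_carrier_commute: assumes H: "hermitian_mat n H"
  shows "gibbs \<beta> H \<in> carrier_mat n n \<and> H * gibbs \<beta> H = gibbs \<beta> H * H"
proof -
  obtain V \<mu> where U: "unitary_mat n V" and He: "H = V * mat_diag n (\<lambda>i. complex_of_real (\<mu> i)) * mat_adjoint V"
    using hermitian_spectral_decomposition[OF H] by blast
  have V: "V \<in> carrier_mat n n" using unitary_matD[OF U] by auto
  have He': "H = unitary_diag n V (\<lambda>i. complex_of_real (\<mu> i))" unfolding unitary_diag_def by (rule He)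
  define E where "E = mexp ((- complex_of_real \<beta>) \<cdot>\<^sub>m H)"
  have Ee: "E = unitary_diag n V (\<lambda>a. exp (- complex_of_real \<beta> * complex_of_real (\<mu> a)))"
    unfolding E_def He' unitary_diag_smult[OF V] mexp_unitary_diag[OF U] ..
  have E: "E \<in> carrier_mat n n" unfolding Ee using V by simp
  have HE: "H * E = E * H" unfolding Ee He' unitary_diag_mult[OF U] by (simp add: mult.commute)
  have g: "gibbs \<beta> H = (1 / ctrace E) \<cdot>\<^sub>m E" unfolding gibbs_def E_def Let_def ..
  have Hc: "H \<in> carrier_mat n n" using H unfolding hermitian_mat_def by auto
  have "H * gibbs \<beta> H = (1 / ctrace E) \<cdot>\<^sub>m (H * E)" unfolding g using Hc E by (rule mult_smult_distrib)
  also have "\<dots> = (1 / ctrace E) \<cdot>\<^sub>m (E * H)" unfolding HE ..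
  also have "\<dots> = gibbs \<beta> H * H" unfolding g using E Hc by (rule mult_smult_assoc_mat[symmetric])
  finally show ?thesis unfolding g using E by simp
qed

definition conj_by :: "complex mat \<Rightarrow> complex mat \<Rightarrow> complex mat" where
  "conj_by V X = V * X * mat_adjoint V"

lemma conj_by_carrier[simp]: "V \<in> carrier_mat n n \<Longrightarrow> X \<in> carrier_mat n n \<Longrightarrow> conj_by V X \<in> carrier_mat n n"
  unfolding conj_by_def by auto

lemma dim_conj_by[simp]: "dim_row (conj_by V X) = dim_row V" "dim_col (conj_by V X) = dim_row V"
  unfolding conj_by_def by auto

lemma index_conj_by: assumes V: "V \<in> carrier_mat n n" and X: "X \<in> carrier_mat n n" and ij: "i < n" "j < n"
  shows "conj_by V X $$ (i,j) = (\<Sum>a<n. \<Sum>b<n. V $$ (i,a) * X $$ (a,b) * cnj (V $$ (j,b)))"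
proof -
  have "conj_by V X $$ (i,j) = (\<Sum>b<n. (V * X) $$ (i,b) * cnj (V $$ (j,b)))"
    unfolding conj_by_def using V X ij by (simp add: scalar_prod_def atLeast0LessThan)
  also have "\<dots> = (\<Sum>b<n. \<Sum>a<n. V $$ (i,a) * X $$ (a,b) * cnj (V $$ (j,b)))"
    using V X ij by (intro sum.cong refl, simp add: scalar_prod_def atLeast0LessThan sum_distrib_right)
  also have "\<dots> = (\<Sum>a<n. \<Sum>b<n. V $$ (i,a) * X $$ (a,b) * cnj (V $$ (j,b)))"
    by (rule sum.swap)
  finally show ?thesis .
qed

lemma conj_by_mult: assumes U: "unitary_mat n V" and X: "X \<in> carrier_mat n n" and Y: "Y \<in> carrier_mat n n"
  shows "conj_by V X * conj_by V Y = conj_by V (X * Y)"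
proof -
  have V: "V \<in> carrier_mat n n" and Va: "mat_adjoint V \<in> carrier_mat n n" using unitary_matD[OF U] by auto
  have 1: "(V * X * mat_adjoint V) * (V * Y * mat_adjoint V) = (V * X) * (mat_adjoint V * (V * Y * mat_adjoint V))"
    using V Va X Y by (intro assoc_mult_mat[of _ n n _ n _ n], auto)
  have 2: "V * Y * mat_adjoint V = V * (Y * mat_adjoint V)"
    using V Va X Y by (intro assoc_mult_mat[of _ n n _ n _ n], auto)
  have 3: "mat_adjoint V * (V * (Y * mat_adjoint V)) = Y * mat_adjoint V"
    using unitary_adjoint_mult_cancel[OF U, of "Y * mat_adjoint V" n] Y Va by auto
  have 4: "(V * X) * (Y * mat_adjoint V) = ((V * X) * Y) * mat_adjoint V"
    using V Va X Y by (intro assoc_mult_mat[of _ n n _ n _ n, symmetric], auto)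
  have 5: "(V * X) * Y = V * (X * Y)"
    using V Va X Y by (intro assoc_mult_mat[of _ n n _ n _ n], auto)
  have "conj_by V X * conj_by V Y = (V * X) * (mat_adjoint V * (V * Y * mat_adjoint V))" unfolding conj_by_def by (rule 1)
  also have "mat_adjoint V * (V * Y * mat_adjoint V) = Y * mat_adjoint V" using 2 3 by simp
  also have "(V * X) * (Y * mat_adjoint V) = V * (X * Y) * mat_adjoint V" using 4 5 by simp
  finally show ?thesis unfolding conj_by_def .
qed

lemma conj_by_minus: assumes V: "V \<in> carrier_mat n n" and X: "X \<in> carrier_mat n n" and Y: "Y \<in> carrier_mat n n"
  shows "conj_by V X - conj_by V Y = conj_by V (X - Y)"
  using assms by (intro eq_matI, auto simp: index_conj_by carrier_matD sum_subtractf right_diff_distrib left_diff_distrib minus_carrier_mat)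

lemma conj_by_smult: assumes V: "V \<in> carrier_mat n n" and X: "X \<in> carrier_mat n n"
  shows "c \<cdot>\<^sub>m conj_by V X = conj_by V (c \<cdot>\<^sub>m X)"
  using assms by (intro eq_matI, auto simp: index_conj_by carrier_matD sum_distrib_left mult.assoc mult.left_commute)

lemma conj_by_adjoint_cancel: assumes U: "unitary_mat n V" and R: "R \<in> carrier_mat n n"
  shows "conj_by V (mat_adjoint V * R * V) = R"
  unfolding conj_by_def by (rule unitary_conj_adjoint_conj[OF U R])

lemma unitary_diag_conj_by: "unitary_diag n V f = conj_by V (mat_diag n f)" unfolding unitary_diag_def conj_by_def ..

lemma conj_by_adjoint: "conj_by (mat_adjoint V) R = mat_adjoint V * R * V" unfolding conj_by_def by simp

lemma unitary_mat_adjoint: "unitary_mat n V \<Longrightarrow> unitary_mat n (mat_adjoint V)"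
  unfolding unitary_mat_def by auto

lemma ctrace_conj_by: assumes U: "unitary_mat n V" and X: "X \<in> carrier_mat n n"
  shows "ctrace (conj_by V X) = ctrace X"
proof -
  have V: "V \<in> carrier_mat n n" using unitary_matD[OF U] by auto
  have "ctrace (conj_by V X) = (\<Sum>i<n. \<Sum>a<n. \<Sum>b<n. V $$ (i,a) * X $$ (a,b) * cnj (V $$ (i,b)))"
    unfolding ctrace_def using V X by (simp add: index_conj_by)
  also have "\<dots> = (\<Sum>a<n. \<Sum>b<n. X $$ (a,b) * (\<Sum>i<n. cnj (V $$ (i,b)) * V $$ (i,a)))"
    by (subst sum.swap, rule sum.cong[OF refl], subst sum.swap, simp add: sum_distrib_left algebra_simps)
  also have "\<dots> = (\<Sum>a<n. \<Sum>b<n. X $$ (a,b) * (if b = a then 1 else 0))"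
    by (intro sum.cong refl, simp add: unitary_cols_orthonormal[OF U])
  also have "\<dots> = (\<Sum>a<n. X $$ (a,a))"
  proof (rule sum.cong[OF refl])
    fix a assume a: "a \<in> {..<n}"
    have "(\<lambda>b. X $$ (a,b) * (if b = a then 1 else 0)) = (\<lambda>b. if b = a then X $$ (a,b) else 0)" by auto
    show "(\<Sum>b<n. X $$ (a,b) * (if b = a then 1 else 0)) = X $$ (a,a)" using a by (simp add: sum_mult_delta_lessThan')
  qed
  also have "\<dots> = ctrace X" unfolding ctrace_def using X by simp
  finally show ?thesis .
qed

definition mat_sum :: "nat \<Rightarrow> 'a set \<Rightarrow> ('a \<Rightarrow> complex mat) \<Rightarrow> complex mat" where
  "mat_sum n F f = mat n n (\<lambda>(i,j). \<Sum>x\<in>F. f x $$ (i,j))"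

lemma mat_sum_carrier[simp]: "mat_sum n F f \<in> carrier_mat n n" unfolding mat_sum_def by auto

lemma dim_mat_sum[simp]: "dim_row (mat_sum n F f) = n" "dim_col (mat_sum n F f) = n" unfolding mat_sum_def by auto

lemma mat_sum_cong: "(\<And>x. x \<in> F \<Longrightarrow> f x = g x) \<Longrightarrow> mat_sum n F f = mat_sum n F g"
  unfolding mat_sum_def by (intro cong_mat refl, auto intro!: sum.cong)

lemma index_mat_sum: "i < n \<Longrightarrow> j < n \<Longrightarrow> mat_sum n F f $$ (i,j) = (\<Sum>x\<in>F. f x $$ (i,j))"
  unfolding mat_sum_def by auto

lemma mat_sum_commutator: assumes H: "H \<in> carrier_mat n n" and f: "\<And>x. x \<in> F \<Longrightarrow> f x \<in> carrier_mat n n"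
  shows "H * mat_sum n F f - mat_sum n F f * H = mat_sum n F (\<lambda>x. H * f x - f x * H)"
proof (rule eq_matI)
  fix i j assume "i < dim_row (mat_sum n F (\<lambda>x. H * f x - f x * H))" "j < dim_col (mat_sum n F (\<lambda>x. H * f x - f x * H))"
  hence ij: "i < n" "j < n" by auto
  have "(H * mat_sum n F f - mat_sum n F f * H) $$ (i,j) = (\<Sum>k<n. H $$ (i,k) * mat_sum n F f $$ (k,j)) - (\<Sum>k<n. mat_sum n F f $$ (i,k) * H $$ (k,j))"
    using H ij by (simp add: scalar_prod_def atLeast0LessThan)
  also have "\<dots> = (\<Sum>x\<in>F. (\<Sum>k<n. H $$ (i,k) * f x $$ (k,j)) - (\<Sum>k<n. f x $$ (i,k) * H $$ (k,j)))"
    using ij by (simp add: index_mat_sum sum_distrib_left sum_distrib_right sum_subtractf sum.swap[of _ F])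
  also have "\<dots> = (\<Sum>x\<in>F. (H * f x - f x * H) $$ (i,j))"
  proof (rule sum.cong[OF refl])
    fix x assume "x \<in> F"
    hence fx: "f x \<in> carrier_mat n n" by (rule f)
    show "(\<Sum>k<n. H $$ (i,k) * f x $$ (k,j)) - (\<Sum>k<n. f x $$ (i,k) * H $$ (k,j)) = (H * f x - f x * H) $$ (i,j)"
      using fx H ij by (simp add: scalar_prod_def atLeast0LessThan)
  qed
  also have "\<dots> = mat_sum n F (\<lambda>x. H * f x - f x * H) $$ (i,j)"
    using ij by (simp add: index_mat_sum)
  finally show "(H * mat_sum n F f - mat_sum n F f * H) $$ (i,j) = mat_sum n F (\<lambda>x. H * f x - f x * H) $$ (i,j)" .
qed (insert H, auto)

lemma mat_sum_eq_0_iff: "mat_sum n F f = 0\<^sub>m n n \<longleftrightarrow> (\<forall>i<n. \<forall>j<n. (\<Sum>x\<in>F. f x $$ (i,j)) = 0)"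
  unfolding mat_sum_def by (auto simp: mat_eq_iff)

lemma kron_mat_sum: assumes f: "\<And>x. x \<in> F \<Longrightarrow> f x \<in> carrier_mat n n" and B: "B \<in> carrier_mat m m"
  shows "kron (mat_sum n F f) B = mat_sum (n*m) F (\<lambda>x. kron (f x) B)"
proof (rule eq_matI)
  fix p q assume "p < dim_row (mat_sum (n*m) F (\<lambda>x. kron (f x) B))" "q < dim_col (mat_sum (n*m) F (\<lambda>x. kron (f x) B))"
  hence pq: "p < n*m" "q < n*m" by auto
  from index_pair_decomp[OF pq(1)] obtain i k where p: "p = i*m+k" "i < n" "k < m" by blast
  from index_pair_decomp[OF pq(2)] obtain j l where q: "q = j*m+l" "j < n" "l < m" by blast
  have "kron (mat_sum n F f) B $$ (p,q) = (\<Sum>x\<in>F. f x $$ (i,j)) * B $$ (k,l)"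
    unfolding p(1) q(1) using index_kron_pair_carrier[OF mat_sum_carrier B p(2) q(2) p(3) q(3)] p q by (simp add: index_mat_sum)
  also have "\<dots> = (\<Sum>x\<in>F. kron (f x) B $$ (p,q))"
    unfolding sum_distrib_right p(1) q(1) using index_kron_pair_carrier[OF f B p(2) q(2) p(3) q(3)] by (intro sum.cong refl) auto
  also have "\<dots> = mat_sum (n*m) F (\<lambda>x. kron (f x) B) $$ (p,q)" using pq by (simp add: index_mat_sum)
  finally show "kron (mat_sum n F f) B $$ (p,q) = mat_sum (n*m) F (\<lambda>x. kron (f x) B) $$ (p,q)" .
qed (insert B, auto)

lemma mult_mat_sum: assumes A: "A \<in> carrier_mat n n" and f: "\<And>x. x \<in> F \<Longrightarrow> f x \<in> carrier_mat n n"
  shows "A * mat_sum n F f = mat_sum n F (\<lambda>x. A * f x)"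
proof (rule eq_matI)
  fix i j assume "i < dim_row (mat_sum n F (\<lambda>x. A * f x))" "j < dim_col (mat_sum n F (\<lambda>x. A * f x))"
  hence ij: "i < n" "j < n" by auto
  have "(A * mat_sum n F f) $$ (i,j) = (\<Sum>k<n. A $$ (i,k) * (\<Sum>x\<in>F. f x $$ (k,j)))"
    using A ij by (simp add: scalar_prod_def atLeast0LessThan index_mat_sum)
  also have "\<dots> = (\<Sum>x\<in>F. \<Sum>k<n. A $$ (i,k) * f x $$ (k,j))" by (simp add: sum_distrib_left sum.swap[of _ F])
  also have "\<dots> = (\<Sum>x\<in>F. (A * f x) $$ (i,j))"
  proof (rule sum.cong[OF refl])
    fix x assume "x \<in> F" hence "f x \<in> carrier_mat n n" by (rule f)
    thus "(\<Sum>k<n. A $$ (i,k) * f x $$ (k,j)) = (A * f x) $$ (i,j)" using A ij by (simp add: scalar_prod_def atLeast0LessThan)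
  qed
  finally show "(A * mat_sum n F f) $$ (i,j) = mat_sum n F (\<lambda>x. A * f x) $$ (i,j)" using ij by (simp add: index_mat_sum)
qed (insert A, auto)

lemma mat_sum_mult: assumes A: "A \<in> carrier_mat n n" and f: "\<And>x. x \<in> F \<Longrightarrow> f x \<in> carrier_mat n n"
  shows "mat_sum n F f * A = mat_sum n F (\<lambda>x. f x * A)"
proof (rule eq_matI)
  fix i j assume "i < dim_row (mat_sum n F (\<lambda>x. f x * A))" "j < dim_col (mat_sum n F (\<lambda>x. f x * A))"
  hence ij: "i < n" "j < n" by auto
  have "(mat_sum n F f * A) $$ (i,j) = (\<Sum>k<n. (\<Sum>x\<in>F. f x $$ (i,k)) * A $$ (k,j))"
    using A ij by (simp add: scalar_prod_def atLeast0LessThan index_mat_sum)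
  also have "\<dots> = (\<Sum>x\<in>F. \<Sum>k<n. f x $$ (i,k) * A $$ (k,j))" by (simp add: sum_distrib_right sum.swap[of _ F])
  also have "\<dots> = (\<Sum>x\<in>F. (f x * A) $$ (i,j))"
  proof (rule sum.cong[OF refl])
    fix x assume "x \<in> F" hence "f x \<in> carrier_mat n n" by (rule f)
    thus "(\<Sum>k<n. f x $$ (i,k) * A $$ (k,j)) = (f x * A) $$ (i,j)" using A ij by (simp add: scalar_prod_def atLeast0LessThan)
  qed
  finally show "(mat_sum n F f * A) $$ (i,j) = mat_sum n F (\<lambda>x. f x * A) $$ (i,j)" using ij by (simp add: index_mat_sum)
qed (insert A, auto)

section \<open>Time averages\<close>

lemma exp_integrable: "(\<lambda>t::real. C * exp (t *\<^sub>R (A::complex))) integrable_on {a..b}"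
  by (intro integrable_continuous_interval continuous_intros)

lemma exp_scaleR_has_integral: assumes A: "A \<noteq> 0" and s: "0 \<le> s"
  shows "((\<lambda>t::real. C * exp (t *\<^sub>R (A::complex))) has_integral (C * (exp (s *\<^sub>R A) - 1) / A)) {0..s}"
proof -
  have "((\<lambda>t. C * exp (t *\<^sub>R A) * A / A) has_integral (C * exp (s *\<^sub>R A) / A - C * exp (0 *\<^sub>R A) / A)) {0..s}"
  proof (rule fundamental_theorem_of_calculus[OF s])
    fix x :: real
    show "((\<lambda>t. C * exp (t *\<^sub>R A) / A) has_vector_derivative C * exp (x *\<^sub>R A) * A / A) (at x within {0..s})"
      using exp_scaleR_has_vector_derivative_right[of A x "{0..s}"]
      by (intro derivative_eq_intros) (auto simp: has_vector_derivative_def intro: has_derivative_mult_right)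
  qed
  thus ?thesis using A by (simp add: field_simps)
qed

lemma norm_integral_exp_imaginary_le:
  fixes \<omega> s :: real and C :: complex assumes \<omega>: "\<omega> \<noteq> 0" and s: "0 \<le> s"
  shows "norm (integral {0..s} (\<lambda>t. C * exp (t *\<^sub>R (\<i> * complex_of_real \<omega>)))) \<le> 2 * cmod C / \<bar>\<omega>\<bar>"
proof -
  let ?A = "\<i> * complex_of_real \<omega>"
  have A: "?A \<noteq> 0" using \<omega> by simp
  have "norm (exp (s *\<^sub>R ?A)) = 1"
    using norm_exp_i_times[of "s * \<omega>"] by (simp add: scaleR_conv_of_real mult.commute)
  hence "norm (exp (s *\<^sub>R ?A) - 1) \<le> 2" using norm_triangle_ineq4[of "exp (s *\<^sub>R ?A)" 1] by simp
  hence "cmod C * norm (exp (s *\<^sub>R ?A) - 1) / cmod ?A \<le> cmod C * 2 / cmod ?A"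
    by (intro divide_right_mono mult_left_mono) auto
  moreover have "integral {0..s} (\<lambda>t. C * exp (t *\<^sub>R ?A)) = C * (exp (s *\<^sub>R ?A) - 1) / ?A"
    by (rule integral_unique[OF exp_scaleR_has_integral[OF A s]])
  ultimately show ?thesis by (simp add: norm_mult norm_divide mult.commute)
qed

lemma time_average_exp: fixes \<omega> :: real and C :: complex
  shows "((\<lambda>s. (1 / complex_of_real s) * integral {0..s} (\<lambda>t. C * exp (t *\<^sub>R (\<i> * complex_of_real \<omega>))))
          \<longlongrightarrow> (if \<omega> = 0 then C else 0)) at_top"
proof (cases "\<omega> = 0")
  case True
  have "eventually (\<lambda>s. (1 / complex_of_real s) * integral {0..s} (\<lambda>t. C * exp (t *\<^sub>R (\<i> * complex_of_real \<omega>))) = C) at_top"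
    using eventually_gt_at_top[of 0] by eventually_elim (use True in \<open>simp add: scaleR_conv_of_real\<close>)
  thus ?thesis using True by (simp add: tendsto_eventually)
next
  case False
  let ?K = "2 * cmod C / \<bar>\<omega>\<bar>"
  have "eventually (\<lambda>s. norm ((1 / complex_of_real s) * integral {0..s} (\<lambda>t. C * exp (t *\<^sub>R (\<i> * complex_of_real \<omega>))))
      \<le> ?K * inverse s) at_top"
    using eventually_gt_at_top[of 0]
  proof eventually_elim
    case (elim s)
    have "norm ((1 / complex_of_real s) * integral {0..s} (\<lambda>t. C * exp (t *\<^sub>R (\<i> * complex_of_real \<omega>))))
        = norm (integral {0..s} (\<lambda>t. C * exp (t *\<^sub>R (\<i> * complex_of_real \<omega>)))) / s"
      using elim by (simp add: norm_mult norm_divide)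
    also have "\<dots> \<le> ?K / s"
      using norm_integral_exp_imaginary_le[OF False, of s C] elim by (intro divide_right_mono) auto
    finally show ?case by (simp add: divide_inverse)
  qed
  moreover have "((\<lambda>s. ?K * inverse s) \<longlongrightarrow> ?K * 0) at_top"
    by (intro tendsto_mult tendsto_const tendsto_inverse_0_at_top filterlim_ident)
  ultimately show ?thesis using False by (simp add: Lim_null_comparison)
qed

lemma time_average_exp_sum: fixes \<omega> :: "'a \<Rightarrow> real" and C :: "'a \<Rightarrow> complex" assumes F: "finite F"
  shows "((\<lambda>s. (1 / complex_of_real s) * integral {0..s} (\<lambda>t. \<Sum>x\<in>F. C x * exp (t *\<^sub>R (\<i> * complex_of_real (\<omega> x)))))
          \<longlongrightarrow> (\<Sum>x\<in>F. if \<omega> x = 0 then C x else 0)) at_top"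
proof -
  have eq: "(\<lambda>s. (1 / complex_of_real s) * integral {0..s} (\<lambda>t. \<Sum>x\<in>F. C x * exp (t *\<^sub>R (\<i> * complex_of_real (\<omega> x))))) =
        (\<lambda>s. \<Sum>x\<in>F. (1 / complex_of_real s) * integral {0..s} (\<lambda>t. C x * exp (t *\<^sub>R (\<i> * complex_of_real (\<omega> x)))))"
    by (rule ext, subst Henstock_Kurzweil_Integration.integral_sum[OF F], auto simp: exp_integrable sum_distrib_left)
  show ?thesis unfolding eq by (rule tendsto_sum, rule time_average_exp)
qed

section \<open>The dephasing map\<close>

lemma mat_diag_sandwich: assumes N: "N \<in> carrier_mat n n"
  shows "mat_diag n f * N * mat_diag n g = mat n n (\<lambda>(a,b). f a * N $$ (a,b) * g b)"
proof -
  have 1: "mat_diag n f * N = mat n n (\<lambda>(a,b). f a * N $$ (a,b))" by (rule mat_diag_mult_left[OF N])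
  have 2: "mat n n (\<lambda>(a,b). f a * N $$ (a,b)) * mat_diag n g = mat n n (\<lambda>(a,b). f a * N $$ (a,b) * g b)"
    by (subst mat_diag_mult_right[of _ n], auto intro!: eq_matI)
  show ?thesis unfolding 1 2 ..
qed

lemma unitary_diag_sandwich: assumes U: "unitary_mat n V" and R: "R \<in> carrier_mat n n"
  shows "unitary_diag n V f * R * unitary_diag n V g = conj_by V (mat n n (\<lambda>(a,b). f a * (mat_adjoint V * R * V) $$ (a,b) * g b))"
proof -
  have V: "V \<in> carrier_mat n n" using unitary_matD[OF U] by auto
  define N where "N = mat_adjoint V * R * V"
  have N: "N \<in> carrier_mat n n" unfolding N_def using V R by auto
  have "unitary_diag n V f * R * unitary_diag n V g = conj_by V (mat_diag n f) * conj_by V N * conj_by V (mat_diag n g)"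
    unfolding unitary_diag_conj_by N_def conj_by_adjoint_cancel[OF U R] ..
  also have "conj_by V (mat_diag n f) * conj_by V N = conj_by V (mat_diag n f * N)"
    using N by (simp add: conj_by_mult[OF U])
  also have "conj_by V (mat_diag n f * N) * conj_by V (mat_diag n g) = conj_by V (mat_diag n f * N * mat_diag n g)"
    using N mult_carrier_mat[OF mat_diag_dim N] by (intro conj_by_mult[OF U], auto)
  also have "\<dots> = conj_by V (mat n n (\<lambda>(a,b). f a * N $$ (a,b) * g b))" by (simp add: mat_diag_sandwich[OF N])
  finally show ?thesis unfolding N_def .
qed

lemma unitary_diag_evolution_sandwich:
  assumes U: "unitary_mat n V" and R: "R \<in> carrier_mat n n"
  shows "mexp ((- \<i> * complex_of_real t) \<cdot>\<^sub>m unitary_diag n V (\<lambda>a. complex_of_real (\<mu> a))) * R *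
      mexp ((\<i> * complex_of_real t) \<cdot>\<^sub>m unitary_diag n V (\<lambda>a. complex_of_real (\<mu> a))) =
    conj_by V (mat n n (\<lambda>(a,b). (mat_adjoint V * R * V) $$ (a,b) * exp (t *\<^sub>R (\<i> * complex_of_real (\<mu> b - \<mu> a)))))"
proof -
  have V: "V \<in> carrier_mat n n" using unitary_matD[OF U] by auto
  have "exp (- \<i> * complex_of_real t * complex_of_real (\<mu> a)) * exp (\<i> * complex_of_real t * complex_of_real (\<mu> b))
      = exp (t *\<^sub>R (\<i> * complex_of_real (\<mu> b - \<mu> a)))" for a b
    unfolding mult_exp_exp by (simp add: scaleR_conv_of_real algebra_simps)
  hence "mat n n (\<lambda>(a,b). exp (- \<i> * complex_of_real t * complex_of_real (\<mu> a)) * (mat_adjoint V * R * V) $$ (a,b) *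
        exp (\<i> * complex_of_real t * complex_of_real (\<mu> b)))
      = mat n n (\<lambda>(a,b). (mat_adjoint V * R * V) $$ (a,b) * exp (t *\<^sub>R (\<i> * complex_of_real (\<mu> b - \<mu> a))))"
    by (intro cong_mat refl) (auto simp: ac_simps)
  thus ?thesis
    unfolding unitary_diag_smult[OF V] mexp_unitary_diag[OF U] unitary_diag_sandwich[OF U R] by simp
qed

lemma dephase_unitary_diag:
  assumes U: "unitary_mat n V" and R: "R \<in> carrier_mat n n"
  shows "dephase (unitary_diag n V (\<lambda>a. complex_of_real (\<mu> a))) R =
    conj_by V (mat n n (\<lambda>(a,b). if \<mu> a = \<mu> b then (mat_adjoint V * R * V) $$ (a,b) else 0))"
proof (rule eq_matI)
  have V: "V \<in> carrier_mat n n" using unitary_matD[OF U] by auto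
  let ?H = "unitary_diag n V (\<lambda>a. complex_of_real (\<mu> a))" and ?N = "mat_adjoint V * R * V"
  define N where "N = ?N"
  fix i j assume "i < dim_row (conj_by V (mat n n (\<lambda>(a,b). if \<mu> a = \<mu> b then ?N $$ (a,b) else 0)))"
    "j < dim_col (conj_by V (mat n n (\<lambda>(a,b). if \<mu> a = \<mu> b then ?N $$ (a,b) else 0)))"
  hence ij: "i < n" "j < n" using V by (auto simp: carrier_matD)
  define K where "K = (\<lambda>(a,b). V $$ (i,a) * N $$ (a,b) * cnj (V $$ (j,b)))"
  define \<omega> where "\<omega> = (\<lambda>(a::nat,b::nat). \<mu> b - \<mu> a)"
  have "(mexp ((- \<i> * complex_of_real t) \<cdot>\<^sub>m ?H) * R * mexp ((\<i> * complex_of_real t) \<cdot>\<^sub>m ?H)) $$ (i,j)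
     = (\<Sum>p\<in>{..<n} \<times> {..<n}. K p * exp (t *\<^sub>R (\<i> * complex_of_real (\<omega> p))))" for t
    unfolding unitary_diag_evolution_sandwich[OF U R, folded N_def] using V ij
    by (subst index_conj_by[of _ n]) (auto simp: sum.cartesian_product K_def \<omega>_def ac_simps intro!: sum.cong)
  hence "((\<lambda>s. (1 / complex_of_real s) * integral {0..s} (\<lambda>t.
      (mexp ((- \<i> * complex_of_real t) \<cdot>\<^sub>m ?H) * R * mexp ((\<i> * complex_of_real t) \<cdot>\<^sub>m ?H)) $$ (i,j)))
      \<longlongrightarrow> (\<Sum>p\<in>{..<n} \<times> {..<n}. if \<omega> p = 0 then K p else 0)) at_top"
    by (simp only:) (rule time_average_exp_sum, simp)
  hence "dephase ?H R $$ (i,j) = (\<Sum>p\<in>{..<n} \<times> {..<n}. if \<omega> p = 0 then K p else 0)"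
    unfolding dephase_def using R ij by (subst index_mat(1)) (auto intro: tendsto_Lim)
  also have "\<dots> = (\<Sum>a<n. \<Sum>b<n. if \<omega> (a,b) = 0 then K (a,b) else 0)"
    by (subst sum.cartesian_product, rule sum.cong, auto)
  also have "\<dots> = conj_by V (mat n n (\<lambda>(a,b). if \<mu> a = \<mu> b then N $$ (a,b) else 0)) $$ (i,j)"
    using V ij by (subst index_conj_by[of _ n]) (auto simp: K_def \<omega>_def intro!: sum.cong)
  finally show "dephase ?H R $$ (i,j) = conj_by V (mat n n (\<lambda>(a,b). if \<mu> a = \<mu> b then ?N $$ (a,b) else 0)) $$ (i,j)"
    unfolding N_def .
qed (use assms unitary_matD[OF assms(1)] in \<open>auto simp: dephase_def carrier_matD\<close>)

section \<open>Partial trace\<close>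

lemma index_kron_id_mult: assumes A: "A \<in> carrier_mat dX dX" and M: "M \<in> carrier_mat (dX*dB) c"
  and i: "i < dX" and k: "k < dB" and q: "q < c"
  shows "(kron A (1\<^sub>m dB) * M) $$ (i*dB+k, q) = (\<Sum>x<dX. A $$ (i,x) * M $$ (x*dB+k, q))"
proof -
  have "(kron A (1\<^sub>m dB) * M) $$ (i*dB+k, q) = (\<Sum>p<dX*dB. kron A (1\<^sub>m dB) $$ (i*dB+k, p) * M $$ (p,q))"
    using A M i k q index_pair_less[OF i k] by (simp add: scalar_prod_def atLeast0LessThan)
  also have "\<dots> = (\<Sum>x<dX. \<Sum>y<dB. kron A (1\<^sub>m dB) $$ (i*dB+k, x*dB+y) * M $$ (x*dB+y,q))"
    by (rule sum_lessThan_mult)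
  also have "\<dots> = (\<Sum>x<dX. \<Sum>y<dB. (if y = k then A $$ (i,x) * M $$ (x*dB+y,q) else 0))"
    using A i k by (intro sum.cong refl, subst index_kron_pair[where A = A and B = "1\<^sub>m dB", simplified], auto)
  also have "\<dots> = (\<Sum>x<dX. A $$ (i,x) * M $$ (x*dB+k, q))" using k by (simp add: sum.delta')
  finally show ?thesis .
qed

lemma index_mult_kron_id: assumes A: "A \<in> carrier_mat dX dX" and M: "M \<in> carrier_mat r (dX*dB)"
  and j: "j < dX" and k: "k < dB" and p: "p < r"
  shows "(M * kron A (1\<^sub>m dB)) $$ (p, j*dB+k) = (\<Sum>x<dX. M $$ (p, x*dB+k) * A $$ (x,j))"
proof -
  have "(M * kron A (1\<^sub>m dB)) $$ (p, j*dB+k) = (\<Sum>q<dX*dB. M $$ (p,q) * kron A (1\<^sub>m dB) $$ (q, j*dB+k))"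
    using A M j k p index_pair_less[OF j k] by (simp add: scalar_prod_def atLeast0LessThan)
  also have "\<dots> = (\<Sum>x<dX. \<Sum>y<dB. M $$ (p, x*dB+y) * kron A (1\<^sub>m dB) $$ (x*dB+y, j*dB+k))"
    by (rule sum_lessThan_mult)
  also have "\<dots> = (\<Sum>x<dX. \<Sum>y<dB. (if y = k then M $$ (p, x*dB+y) * A $$ (x,j) else 0))"
    using A j k by (intro sum.cong refl, subst index_kron_pair[where A = A and B = "1\<^sub>m dB", simplified], auto)
  also have "\<dots> = (\<Sum>x<dX. M $$ (p, x*dB+k) * A $$ (x,j))" using k by (simp add: sum.delta')
  finally show ?thesis .
qed

lemma index_id_kron_mult: assumes B: "B \<in> carrier_mat dB dB" and M: "M \<in> carrier_mat (dX*dB) c"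
  and i: "i < dX" and k: "k < dB" and q: "q < c"
  shows "(kron (1\<^sub>m dX) B * M) $$ (i*dB+k, q) = (\<Sum>y<dB. B $$ (k,y) * M $$ (i*dB+y, q))"
proof -
  have "(kron (1\<^sub>m dX) B * M) $$ (i*dB+k, q) = (\<Sum>p<dX*dB. kron (1\<^sub>m dX) B $$ (i*dB+k, p) * M $$ (p,q))"
    using B M i k q index_pair_less[OF i k] by (simp add: scalar_prod_def atLeast0LessThan)
  also have "\<dots> = (\<Sum>x<dX. \<Sum>y<dB. kron (1\<^sub>m dX) B $$ (i*dB+k, x*dB+y) * M $$ (x*dB+y,q))"
    by (rule sum_lessThan_mult)
  also have "\<dots> = (\<Sum>x<dX. if x = i then (\<Sum>y<dB. B $$ (k,y) * M $$ (x*dB+y,q)) else 0)"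
  proof (intro sum.cong refl)
    fix x assume x: "x \<in> {..<dX}"
    have "(\<Sum>y<dB. kron (1\<^sub>m dX) B $$ (i*dB+k, x*dB+y) * M $$ (x*dB+y,q)) =
       (\<Sum>y<dB. (if x = i then B $$ (k,y) * M $$ (x*dB+y,q) else 0))"
      using B i k x by (intro sum.cong refl, subst index_kron_pair_carrier[OF one_carrier_mat B], auto)
    thus "(\<Sum>y<dB. kron (1\<^sub>m dX) B $$ (i*dB+k, x*dB+y) * M $$ (x*dB+y,q)) =
       (if x = i then (\<Sum>y<dB. B $$ (k,y) * M $$ (x*dB+y,q)) else 0)" by auto
  qed
  also have "\<dots> = (\<Sum>y<dB. B $$ (k,y) * M $$ (i*dB+y, q))" using i by (simp add: sum.delta')
  finally show ?thesis .
qed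

lemma index_mult_id_kron: assumes B: "B \<in> carrier_mat dB dB" and M: "M \<in> carrier_mat r (dX*dB)"
  and j: "j < dX" and k: "k < dB" and p: "p < r"
  shows "(M * kron (1\<^sub>m dX) B) $$ (p, j*dB+k) = (\<Sum>y<dB. M $$ (p, j*dB+y) * B $$ (y,k))"
proof -
  have "(M * kron (1\<^sub>m dX) B) $$ (p, j*dB+k) = (\<Sum>q<dX*dB. M $$ (p,q) * kron (1\<^sub>m dX) B $$ (q, j*dB+k))"
    using B M j k p index_pair_less[OF j k] by (simp add: scalar_prod_def atLeast0LessThan)
  also have "\<dots> = (\<Sum>x<dX. \<Sum>y<dB. M $$ (p, x*dB+y) * kron (1\<^sub>m dX) B $$ (x*dB+y, j*dB+k))"
    by (rule sum_lessThan_mult)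
  also have "\<dots> = (\<Sum>x<dX. if x = j then (\<Sum>y<dB. M $$ (p, x*dB+y) * B $$ (y,k)) else 0)"
  proof (intro sum.cong refl)
    fix x assume x: "x \<in> {..<dX}"
    have "(\<Sum>y<dB. M $$ (p, x*dB+y) * kron (1\<^sub>m dX) B $$ (x*dB+y, j*dB+k)) =
       (\<Sum>y<dB. (if x = j then M $$ (p, x*dB+y) * B $$ (y,k) else 0))"
      using B j k x by (intro sum.cong refl, subst index_kron_pair_carrier[OF one_carrier_mat B], auto)
    thus "(\<Sum>y<dB. M $$ (p, x*dB+y) * kron (1\<^sub>m dX) B $$ (x*dB+y, j*dB+k)) =
       (if x = j then (\<Sum>y<dB. M $$ (p, x*dB+y) * B $$ (y,k)) else 0)" by auto
  qed
  also have "\<dots> = (\<Sum>y<dB. M $$ (p, j*dB+y) * B $$ (y,k))" using j by (simp add: sum.delta')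
  finally show ?thesis .
qed

lemma dim_ptrace2[simp]: "dim_row (ptrace2 dB M) = dim_row M div dB" "dim_col (ptrace2 dB M) = dim_col M div dB"
  unfolding ptrace2_def by auto

lemma ptrace2_carrier[simp]: "0 < dB \<Longrightarrow> M \<in> carrier_mat (dX*dB) (dX*dB) \<Longrightarrow> ptrace2 dB M \<in> carrier_mat dX dX"
  unfolding ptrace2_def by auto

lemma index_ptrace2: "0 < dB \<Longrightarrow> M \<in> carrier_mat (dX*dB) (dX*dB) \<Longrightarrow> i < dX \<Longrightarrow> j < dX \<Longrightarrow>
   ptrace2 dB M $$ (i,j) = (\<Sum>k<dB. M $$ (i*dB+k, j*dB+k))"
  unfolding ptrace2_def by auto

lemma ptrace2_kron_id_mult: assumes dB: "0 < dB" and A: "A \<in> carrier_mat dX dX" and M: "M \<in> carrier_mat (dX*dB) (dX*dB)"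
  shows "ptrace2 dB (kron A (1\<^sub>m dB) * M) = A * ptrace2 dB M"
proof (rule eq_matI)
  have KM: "kron A (1\<^sub>m dB) * M \<in> carrier_mat (dX*dB) (dX*dB)" using A M by auto
  fix i j assume "i < dim_row (A * ptrace2 dB M)" "j < dim_col (A * ptrace2 dB M)"
  hence ij: "i < dX" "j < dX" using A M dB by (auto simp: ptrace2_def)
  have "ptrace2 dB (kron A (1\<^sub>m dB) * M) $$ (i,j) = (\<Sum>k<dB. \<Sum>x<dX. A $$ (i,x) * M $$ (x*dB+k, j*dB+k))"
    using dB KM ij by (simp add: index_ptrace2 index_kron_id_mult[OF A M] index_pair_less)
  also have "\<dots> = (\<Sum>x<dX. A $$ (i,x) * (\<Sum>k<dB. M $$ (x*dB+k, j*dB+k)))"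
    by (subst sum.swap, simp add: sum_distrib_left)
  also have "\<dots> = (A * ptrace2 dB M) $$ (i,j)"
    using dB A M ij by (simp add: scalar_prod_def atLeast0LessThan index_ptrace2)
  finally show "ptrace2 dB (kron A (1\<^sub>m dB) * M) $$ (i,j) = (A * ptrace2 dB M) $$ (i,j)" .
qed (insert dB A M, auto simp: ptrace2_def)

lemma ptrace2_mult_kron_id: assumes dB: "0 < dB" and A: "A \<in> carrier_mat dX dX" and M: "M \<in> carrier_mat (dX*dB) (dX*dB)"
  shows "ptrace2 dB (M * kron A (1\<^sub>m dB)) = ptrace2 dB M * A"
proof (rule eq_matI)
  have KM: "M * kron A (1\<^sub>m dB) \<in> carrier_mat (dX*dB) (dX*dB)" using A M by auto
  fix i j assume "i < dim_row (ptrace2 dB M * A)" "j < dim_col (ptrace2 dB M * A)"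
  hence ij: "i < dX" "j < dX" using A M dB by (auto simp: ptrace2_def)
  have "ptrace2 dB (M * kron A (1\<^sub>m dB)) $$ (i,j) = (\<Sum>k<dB. \<Sum>x<dX. M $$ (i*dB+k, x*dB+k) * A $$ (x,j))"
    using dB KM ij by (simp add: index_ptrace2 index_mult_kron_id[OF A M] index_pair_less)
  also have "\<dots> = (\<Sum>x<dX. (\<Sum>k<dB. M $$ (i*dB+k, x*dB+k)) * A $$ (x,j))"
    by (subst sum.swap, simp add: sum_distrib_right)
  also have "\<dots> = (ptrace2 dB M * A) $$ (i,j)"
    using dB A M ij by (simp add: scalar_prod_def atLeast0LessThan index_ptrace2)
  finally show "ptrace2 dB (M * kron A (1\<^sub>m dB)) $$ (i,j) = (ptrace2 dB M * A) $$ (i,j)" .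
qed (insert dB A M, auto simp: ptrace2_def)

lemma ptrace2_id_kron_mult_commute: assumes dB: "0 < dB" and B: "B \<in> carrier_mat dB dB" and M: "M \<in> carrier_mat (dX*dB) (dX*dB)"
  shows "ptrace2 dB (kron (1\<^sub>m dX) B * M) = ptrace2 dB (M * kron (1\<^sub>m dX) B)"
proof (rule eq_matI)
  have KM: "kron (1\<^sub>m dX) B * M \<in> carrier_mat (dX*dB) (dX*dB)" using B M by auto
  have MK: "M * kron (1\<^sub>m dX) B \<in> carrier_mat (dX*dB) (dX*dB)" using B M by auto
  fix i j assume "i < dim_row (ptrace2 dB (M * kron (1\<^sub>m dX) B))" "j < dim_col (ptrace2 dB (M * kron (1\<^sub>m dX) B))"
  hence ij: "i < dX" "j < dX" using B M dB by (auto simp: ptrace2_def)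
  have "ptrace2 dB (kron (1\<^sub>m dX) B * M) $$ (i,j) = (\<Sum>k<dB. \<Sum>y<dB. B $$ (k,y) * M $$ (i*dB+y, j*dB+k))"
    using dB KM ij by (simp add: index_ptrace2 index_id_kron_mult[OF B M] index_pair_less)
  also have "\<dots> = (\<Sum>y<dB. \<Sum>k<dB. M $$ (i*dB+y, j*dB+k) * B $$ (k,y))"
    by (subst sum.swap, simp add: mult.commute)
  also have "\<dots> = ptrace2 dB (M * kron (1\<^sub>m dX) B) $$ (i,j)"
    using dB MK ij by (simp add: index_ptrace2 index_mult_id_kron[OF B M] index_pair_less)
  finally show "ptrace2 dB (kron (1\<^sub>m dX) B * M) $$ (i,j) = ptrace2 dB (M * kron (1\<^sub>m dX) B) $$ (i,j)" .
qed (insert dB B M, auto simp: ptrace2_def)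

lemma ptrace2_minus: assumes dB: "0 < dB" and M: "M \<in> carrier_mat (dX*dB) (dX*dB)" and M': "M' \<in> carrier_mat (dX*dB) (dX*dB)"
  shows "ptrace2 dB (M - M') = ptrace2 dB M - ptrace2 dB M'"
  using assms by (intro eq_matI, auto simp: ptrace2_def sum_subtractf index_pair_less)

lemma ptrace2_add: assumes dB: "0 < dB" and M: "M \<in> carrier_mat (dX*dB) (dX*dB)" and M': "M' \<in> carrier_mat (dX*dB) (dX*dB)"
  shows "ptrace2 dB (M + M') = ptrace2 dB M + ptrace2 dB M'"
  using assms by (intro eq_matI, auto simp: ptrace2_def sum.distrib index_pair_less)

lemma ptrace2_smult: assumes dB: "0 < dB" and M: "M \<in> carrier_mat (dX*dB) (dX*dB)"
  shows "ptrace2 dB (c \<cdot>\<^sub>m M) = c \<cdot>\<^sub>m ptrace2 dB M"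
  using assms by (intro eq_matI, auto simp: ptrace2_def sum_distrib_left index_pair_less)

lemma ptrace2_mat_sum: assumes dB: "0 < dB" and f: "\<And>x. x \<in> F \<Longrightarrow> f x \<in> carrier_mat (dX*dB) (dX*dB)"
  shows "ptrace2 dB (mat_sum (dX*dB) F f) = mat_sum dX F (\<lambda>x. ptrace2 dB (f x))"
proof (rule eq_matI)
  fix i j assume "i < dim_row (mat_sum dX F (\<lambda>x. ptrace2 dB (f x)))" "j < dim_col (mat_sum dX F (\<lambda>x. ptrace2 dB (f x)))"
  hence ij: "i < dX" "j < dX" by auto
  have "ptrace2 dB (mat_sum (dX*dB) F f) $$ (i,j) = (\<Sum>k<dB. \<Sum>x\<in>F. f x $$ (i*dB+k, j*dB+k))"
    by (subst index_ptrace2[OF dB mat_sum_carrier ij], rule sum.cong[OF refl], auto simp: index_mat_sum index_pair_less ij)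
  also have "\<dots> = (\<Sum>x\<in>F. \<Sum>k<dB. f x $$ (i*dB+k, j*dB+k))" by (rule sum.swap)
  also have "\<dots> = (\<Sum>x\<in>F. ptrace2 dB (f x) $$ (i,j))"
    by (rule sum.cong[OF refl], rule index_ptrace2[OF dB f ij, symmetric])
  also have "\<dots> = mat_sum dX F (\<lambda>x. ptrace2 dB (f x)) $$ (i,j)" using ij by (simp add: index_mat_sum)
  finally show "ptrace2 dB (mat_sum (dX*dB) F f) $$ (i,j) = mat_sum dX F (\<lambda>x. ptrace2 dB (f x)) $$ (i,j)" .
qed (insert dB, auto)

section \<open>Modes\<close>

definition is_mode :: "nat \<Rightarrow> complex mat \<Rightarrow> complex \<Rightarrow> complex mat \<Rightarrow> bool" where
  "is_mode n H \<omega> Y \<longleftrightarrow> Y \<in> carrier_mat n n \<and> H * Y - Y * H = \<omega> \<cdot>\<^sub>m Y"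

lemma add_minus_add_mat: fixes A B C D :: "complex mat"
  assumes "A \<in> carrier_mat n m" "B \<in> carrier_mat n m" "C \<in> carrier_mat n m" "D \<in> carrier_mat n m"
  shows "(A + B) - (C + D) = (A - C) + (B - D)"
  using assms by (intro eq_matI, auto)

lemma is_mode_minus: "is_mode n H \<omega> A \<Longrightarrow> is_mode n H \<omega> B \<Longrightarrow> H \<in> carrier_mat n n \<Longrightarrow> is_mode n H \<omega> (A - B)"
  unfolding is_mode_def
proof (elim conjE, intro conjI)
  assume A: "A \<in> carrier_mat n n" and B: "B \<in> carrier_mat n n" and H: "H \<in> carrier_mat n n"
    and a: "H * A - A * H = \<omega> \<cdot>\<^sub>m A" and b: "H * B - B * H = \<omega> \<cdot>\<^sub>m B"
  show "A - B \<in> carrier_mat n n" using B by (rule minus_carrier_mat)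
  have "H * (A - B) - (A - B) * H = (H * A - A * H) - (H * B - B * H)"
    using A B H by (intro eq_matI, auto simp: scalar_prod_def sum_subtractf algebra_simps)
  also have "\<dots> = \<omega> \<cdot>\<^sub>m (A - B)" unfolding a b using A B by (intro eq_matI, auto simp: algebra_simps)
  finally show "H * (A - B) - (A - B) * H = \<omega> \<cdot>\<^sub>m (A - B)" .
qed

lemma is_mode_smult:
  assumes "is_mode n H \<omega> Z" "H \<in> carrier_mat n n"
  shows "is_mode n H \<omega> (c \<cdot>\<^sub>m Z)"
proof -
  have Z: "Z \<in> carrier_mat n n" and HZ: "H * Z - Z * H = \<omega> \<cdot>\<^sub>m Z" using assms(1) unfolding is_mode_def by auto
  have "H * (c \<cdot>\<^sub>m Z) - (c \<cdot>\<^sub>m Z) * H = c \<cdot>\<^sub>m (H * Z - Z * H)"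
    using Z assms(2) by (intro eq_matI) (auto simp: algebra_simps scalar_prod_def sum_distrib_left)
  also have "\<dots> = \<omega> \<cdot>\<^sub>m (c \<cdot>\<^sub>m Z)" unfolding HZ by (intro eq_matI) auto
  finally show ?thesis using Z unfolding is_mode_def by simp
qed

lemma commute_imp_zero_mode:
  assumes "H \<in> carrier_mat n n" "A \<in> carrier_mat n n" "H * A = A * H"
  shows "is_mode n H 0 A"
  using assms unfolding is_mode_def by (auto intro!: eq_matI)

lemma kron_mode: fixes HX HB Y G :: "complex mat"
  assumes HX: "HX \<in> carrier_mat dX dX" and HB: "HB \<in> carrier_mat dB dB"
    and Y: "is_mode dX HX \<omega> Y" and G: "G \<in> carrier_mat dB dB" and GB: "HB * G = G * HB"
  shows "is_mode (dX*dB) (kron HX (1\<^sub>m dB) + kron (1\<^sub>m dX) HB) \<omega> (kron Y G)"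
proof -
  have Yc: "Y \<in> carrier_mat dX dX" and Ym: "HX * Y - Y * HX = \<omega> \<cdot>\<^sub>m Y" using Y unfolding is_mode_def by auto
  have K1: "kron HX (1\<^sub>m dB) \<in> carrier_mat (dX*dB) (dX*dB)" and K2: "kron (1\<^sub>m dX) HB \<in> carrier_mat (dX*dB) (dX*dB)"
    and K3: "kron Y G \<in> carrier_mat (dX*dB) (dX*dB)" using HX HB Yc G by auto
  have a: "kron HX (1\<^sub>m dB) * kron Y G = kron (HX * Y) G" using HX Yc G by (subst kron_mult, auto)
  have b: "kron (1\<^sub>m dX) HB * kron Y G = kron Y (HB * G)" using HB Yc G by (subst kron_mult, auto)
  have c: "kron Y G * kron HX (1\<^sub>m dB) = kron (Y * HX) G" using HX Yc G by (subst kron_mult, auto)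
  have d: "kron Y G * kron (1\<^sub>m dX) HB = kron Y (G * HB)" using HB Yc G by (subst kron_mult, auto)
  have "(kron HX (1\<^sub>m dB) + kron (1\<^sub>m dX) HB) * kron Y G - kron Y G * (kron HX (1\<^sub>m dB) + kron (1\<^sub>m dX) HB)
     = (kron (HX * Y) G + kron Y (HB * G)) - (kron (Y * HX) G + kron Y (G * HB))"
    using K1 K2 K3 by (simp add: add_mult_distrib_mat[of _ "dX*dB" "dX*dB"] mult_add_distrib_mat[of _ "dX*dB" "dX*dB"] a b c d)
  also have "\<dots> = (kron (HX * Y) G - kron (Y * HX) G) + (kron Y (HB * G) - kron Y (G * HB))"
    using HX HB Yc G by (intro add_minus_add_mat[of _ "dX*dB" "dX*dB"], auto)
  also have "kron (HX * Y) G - kron (Y * HX) G = kron (HX * Y - Y * HX) G"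
    using HX Yc G by (intro kron_minus_left[symmetric], auto)
  also have "kron Y (HB * G) - kron Y (G * HB) = 0\<^sub>m (dX*dB) (dX*dB)" unfolding GB using Yc G HB by simp
  also have "kron (HX * Y - Y * HX) G + 0\<^sub>m (dX*dB) (dX*dB) = \<omega> \<cdot>\<^sub>m kron Y G"
    unfolding Ym using Yc G by (simp add: kron_smult_left)
  finally show ?thesis unfolding is_mode_def using K3 by simp
qed

lemma unitary_adjoint_commute: assumes U: "unitary_mat n U" and H: "H \<in> carrier_mat n n" and UH: "U * H = H * U"
  shows "mat_adjoint U * H = H * mat_adjoint U"
proof -
  have Uc: "U \<in> carrier_mat n n" and Ua: "mat_adjoint U \<in> carrier_mat n n" using unitary_matD[OF U] by auto
  have "mat_adjoint U * H = mat_adjoint U * (H * (U * mat_adjoint U))" using unitary_matD[OF U] H by simp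
  also have "\<dots> = mat_adjoint U * ((H * U) * mat_adjoint U)" using Uc Ua H by (subst assoc_mult_mat[of _ n n _ n _ n], auto)
  also have "\<dots> = mat_adjoint U * (U * (H * mat_adjoint U))"
    unfolding UH[symmetric] using Uc Ua H by (subst assoc_mult_mat[of _ n n _ n _ n], auto)
  also have "\<dots> = H * mat_adjoint U" using unitary_adjoint_mult_cancel[OF U, of "H * mat_adjoint U" n] H Ua by auto
  finally show ?thesis .
qed

lemma conj_unitary_mode: assumes U: "unitary_mat n U" and H: "H \<in> carrier_mat n n" and UH: "U * H = H * U"
  and M: "is_mode n H \<omega> M"
  shows "is_mode n H \<omega> (U * M * mat_adjoint U)"
proof -
  have Uc: "U \<in> carrier_mat n n" and Ua: "mat_adjoint U \<in> carrier_mat n n" using unitary_matD[OF U] by auto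
  have Mc: "M \<in> carrier_mat n n" and Mm: "H * M - M * H = \<omega> \<cdot>\<^sub>m M" using M unfolding is_mode_def by auto
  have UaH: "mat_adjoint U * H = H * mat_adjoint U" by (rule unitary_adjoint_commute[OF U H UH])
  have 1: "H * conj_by U M = conj_by U (H * M)"
  proof -
    have e0: "H * (U * M * mat_adjoint U) = (H * (U * M)) * mat_adjoint U"
      using Uc Ua H Mc by (intro assoc_mult_mat[of _ n n _ n _ n, symmetric], auto)
    have e1: "H * (U * M) = (H * U) * M" using Uc Ua H Mc by (intro assoc_mult_mat[of _ n n _ n _ n, symmetric], auto)
    have "H * (U * M * mat_adjoint U) = (H * U) * M * mat_adjoint U" unfolding e0 e1 ..
    also have "\<dots> = U * (H * M) * mat_adjoint U" unfolding UH[symmetric] using Uc Ua H Mc by simp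
    finally show ?thesis unfolding conj_by_def .
  qed
  have 2: "conj_by U M * H = conj_by U (M * H)"
  proof -
    have "(U * M * mat_adjoint U) * H = U * M * (mat_adjoint U * H)"
      using Uc Ua H Mc by (intro assoc_mult_mat[of _ n n _ n _ n], auto)
    also have "\<dots> = U * M * H * mat_adjoint U"
      unfolding UaH using Uc Ua H Mc by (intro assoc_mult_mat[of _ n n _ n _ n, symmetric], auto)
    also have "U * M * H = U * (M * H)" using Uc Ua H Mc by (intro assoc_mult_mat[of _ n n _ n _ n], auto)
    finally show ?thesis unfolding conj_by_def .
  qed
  have "H * conj_by U M - conj_by U M * H = conj_by U (H * M - M * H)" unfolding 1 2 using Uc H Mc by (intro conj_by_minus, auto)
  also have "\<dots> = \<omega> \<cdot>\<^sub>m conj_by U M" unfolding Mm using Uc Mc by (simp add: conj_by_smult)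
  finally show ?thesis unfolding is_mode_def conj_by_def[symmetric] using Uc Mc by simp
qed

lemma ptrace2_mode: assumes dB: "0 < dB" and HX: "HX \<in> carrier_mat dX dX" and HB: "HB \<in> carrier_mat dB dB"
  and M: "is_mode (dX*dB) (kron HX (1\<^sub>m dB) + kron (1\<^sub>m dX) HB) \<omega> M"
  shows "is_mode dX HX \<omega> (ptrace2 dB M)"
proof -
  let ?A = "kron HX (1\<^sub>m dB)" and ?B = "kron (1\<^sub>m dX) HB"
  have Mc: "M \<in> carrier_mat (dX*dB) (dX*dB)" and Mm: "(?A + ?B) * M - M * (?A + ?B) = \<omega> \<cdot>\<^sub>m M"
    using M unfolding is_mode_def by auto
  have A: "?A \<in> carrier_mat (dX*dB) (dX*dB)" and B: "?B \<in> carrier_mat (dX*dB) (dX*dB)" using HX HB by auto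
  have "(?A + ?B) * M - M * (?A + ?B) = (?A * M + ?B * M) - (M * ?A + M * ?B)"
    using A B Mc by (simp add: add_mult_distrib_mat[of _ "dX*dB" "dX*dB"] mult_add_distrib_mat[of _ "dX*dB" "dX*dB"])
  also have "\<dots> = (?A * M - M * ?A) + (?B * M - M * ?B)"
    using A B Mc by (intro add_minus_add_mat[of _ "dX*dB" "dX*dB"], auto)
  finally have eq: "(?A * M - M * ?A) + (?B * M - M * ?B) = \<omega> \<cdot>\<^sub>m M" using Mm by simp
  have "ptrace2 dB (\<omega> \<cdot>\<^sub>m M) = ptrace2 dB (?A * M - M * ?A) + ptrace2 dB (?B * M - M * ?B)"
    unfolding eq[symmetric] using A B Mc dB by (intro ptrace2_add[where dX = dX], auto intro: minus_carrier_mat)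
  also have "ptrace2 dB (?B * M - M * ?B) = 0\<^sub>m dX dX"
  proof -
    have "ptrace2 dB (?B * M - M * ?B) = ptrace2 dB (?B * M) - ptrace2 dB (M * ?B)"
      using B Mc dB by (intro ptrace2_minus[where dX = dX], auto)
    also have "\<dots> = 0\<^sub>m dX dX" unfolding ptrace2_id_kron_mult_commute[OF dB HB Mc] using dB B Mc by simp
    finally show ?thesis .
  qed
  also have "ptrace2 dB (?A * M - M * ?A) = HX * ptrace2 dB M - ptrace2 dB M * HX"
  proof -
    have "ptrace2 dB (?A * M - M * ?A) = ptrace2 dB (?A * M) - ptrace2 dB (M * ?A)"
      using A Mc dB by (intro ptrace2_minus[where dX = dX], auto)
    thus ?thesis unfolding ptrace2_kron_id_mult[OF dB HX Mc] ptrace2_mult_kron_id[OF dB HX Mc] .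
  qed
  finally have "HX * ptrace2 dB M - ptrace2 dB M * HX = \<omega> \<cdot>\<^sub>m ptrace2 dB M"
  proof -
    assume a: "ptrace2 dB (\<omega> \<cdot>\<^sub>m M) = HX * ptrace2 dB M - ptrace2 dB M * HX + 0\<^sub>m dX dX"
    have Pc: "HX * ptrace2 dB M - ptrace2 dB M * HX \<in> carrier_mat dX dX"
      using dB Mc HX by (auto intro: minus_carrier_mat)
    show ?thesis using a Pc ptrace2_smult[OF dB Mc, of \<omega>] by simp
  qed
  thus ?thesis unfolding is_mode_def using dB Mc by simp
qed

lemma mode_sum_eq_0_imp_weighted_sum_eq_0:
  assumes H: "H \<in> carrier_mat n n" and Z: "\<And>\<omega>. \<omega> \<in> F \<Longrightarrow> is_mode n H \<omega> (Z \<omega>)"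
    and S: "mat_sum n F Z = 0\<^sub>m n n" and ij: "i < n" "j < n"
  shows "(\<Sum>\<omega>\<in>F. \<omega> * Z \<omega> $$ (i,j)) = 0"
proof -
  have Zc: "\<And>\<omega>. \<omega> \<in> F \<Longrightarrow> Z \<omega> \<in> carrier_mat n n" using Z unfolding is_mode_def by auto
  have "mat_sum n F (\<lambda>\<omega>. \<omega> \<cdot>\<^sub>m Z \<omega>) = mat_sum n F (\<lambda>\<omega>. H * Z \<omega> - Z \<omega> * H)"
    using Z unfolding is_mode_def by (intro mat_sum_cong) simp
  also have "\<dots> = H * mat_sum n F Z - mat_sum n F Z * H" by (rule mat_sum_commutator[OF H Zc, symmetric])
  also have "\<dots> = 0\<^sub>m n n" unfolding S using H by simp
  finally have "mat_sum n F (\<lambda>\<omega>. \<omega> \<cdot>\<^sub>m Z \<omega>) $$ (i,j) = 0" using ij by simp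
  moreover have "\<omega> * Z \<omega> $$ (i,j) = (\<omega> \<cdot>\<^sub>m Z \<omega>) $$ (i,j)" if "\<omega> \<in> F" for \<omega>
    using Zc[OF that] ij by simp
  hence "(\<Sum>\<omega>\<in>F. \<omega> * Z \<omega> $$ (i,j)) = mat_sum n F (\<lambda>\<omega>. \<omega> \<cdot>\<^sub>m Z \<omega>) $$ (i,j)"
    unfolding index_mat_sum[OF ij] by (rule sum.cong[OF refl])
  ultimately show ?thesis by simp
qed

text \<open>Modes of distinct frequencies are linearly independent, being eigenvectors of the commutator with \<open>H\<close>.\<close>

lemma mode_sum_eq_0_imp_eq_0:
  assumes F: "finite F" and H: "H \<in> carrier_mat n n"
    and Z: "\<And>\<omega>. \<omega> \<in> F \<Longrightarrow> is_mode n H \<omega> (Z \<omega>)" and S: "mat_sum n F Z = 0\<^sub>m n n"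
  shows "\<forall>\<omega>\<in>F. Z \<omega> = 0\<^sub>m n n"
  using F Z S
proof (induction F arbitrary: Z rule: finite_induct)
  case empty thus ?case by simp
next
  case (insert x F Z)
  have Zc: "\<And>\<omega>. \<omega> \<in> insert x F \<Longrightarrow> Z \<omega> \<in> carrier_mat n n" using insert.prems(1) unfolding is_mode_def by auto
  have S0: "(\<Sum>\<omega>\<in>insert x F. Z \<omega> $$ (i,j)) = 0" if "i < n" "j < n" for i j
    using insert.prems(2) that unfolding mat_sum_eq_0_iff by auto
  have S1: "(\<Sum>\<omega>\<in>insert x F. \<omega> * Z \<omega> $$ (i,j)) = 0" if "i < n" "j < n" for i j
    by (rule mode_sum_eq_0_imp_weighted_sum_eq_0[OF H insert.prems that])
  define Z' where "Z' \<omega> = (\<omega> - x) \<cdot>\<^sub>m Z \<omega>" for \<omega>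
  have "mat_sum n F Z' = 0\<^sub>m n n"
    unfolding mat_sum_eq_0_iff
  proof (intro allI impI)
    fix i j assume ij: "i < n" "j < n"
    have "Z' \<omega> $$ (i,j) = \<omega> * Z \<omega> $$ (i,j) - x * Z \<omega> $$ (i,j)" if "\<omega> \<in> F" for \<omega>
      using Zc[OF insertI2[OF that]] ij unfolding Z'_def by (simp add: left_diff_distrib)
    hence "(\<Sum>\<omega>\<in>F. Z' \<omega> $$ (i,j)) = (\<Sum>\<omega>\<in>F. \<omega> * Z \<omega> $$ (i,j)) - x * (\<Sum>\<omega>\<in>F. Z \<omega> $$ (i,j))"
      unfolding sum_distrib_left sum_subtractf[symmetric] by (rule sum.cong[OF refl])
    also have "\<dots> = 0" using S0[OF ij] S1[OF ij] insert.hyps by (simp add: add_eq_0_iff algebra_simps)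
    finally show "(\<Sum>\<omega>\<in>F. Z' \<omega> $$ (i,j)) = 0" .
  qed
  moreover have "is_mode n H \<omega> (Z' \<omega>)" if "\<omega> \<in> F" for \<omega>
    unfolding Z'_def using insert.prems(1) that H by (intro is_mode_smult) auto
  ultimately have Z'0: "\<forall>\<omega>\<in>F. Z' \<omega> = 0\<^sub>m n n" using insert.IH by blast
  have ZF: "Z \<omega> = 0\<^sub>m n n" if "\<omega> \<in> F" for \<omega>
  proof -
    have "\<omega> - x \<noteq> 0" using insert.hyps that by auto
    hence "Z \<omega> = (1 / (\<omega> - x)) \<cdot>\<^sub>m Z' \<omega>" unfolding Z'_def using Zc that by (intro eq_matI) auto
    thus ?thesis using Z'0 that by auto
  qed
  have "Z x = 0\<^sub>m n n"
  proof (rule eq_matI)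
    fix i j assume "i < dim_row (0\<^sub>m n n :: complex mat)" "j < dim_col (0\<^sub>m n n :: complex mat)"
    hence ij: "i < n" "j < n" by auto
    thus "Z x $$ (i,j) = 0\<^sub>m n n $$ (i,j)" using S0[OF ij] ZF insert.hyps by simp
  qed (use Zc[of x] in auto)
  with ZF show ?case by auto
qed

lemma zero_mode_of_mode_sum:
  assumes F: "finite F" and F0: "0 \<in> F" and H: "H \<in> carrier_mat n n"
    and Y: "\<And>\<omega>. \<omega> \<in> F \<Longrightarrow> is_mode n H \<omega> (Y \<omega>)"
    and G: "is_mode n H 0 G" and sum: "mat_sum n F Y = G"
  shows "Y 0 = G"
proof -
  define Z where "Z = (\<lambda>\<omega>. if \<omega> = 0 then Y 0 - G else Y \<omega>)"
  have Gc: "G \<in> carrier_mat n n" using G unfolding is_mode_def by simp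
  have Z: "is_mode n H \<omega> (Z \<omega>)" if "\<omega> \<in> F" for \<omega>
    using Y[OF that] Y[OF F0] is_mode_minus[OF _ G H] unfolding Z_def by auto
  have "mat_sum n F Z = 0\<^sub>m n n"
    unfolding mat_sum_eq_0_iff
  proof (intro allI impI)
    fix i j assume ij: "i < n" "j < n"
    have "(\<Sum>\<omega>\<in>F. Z \<omega> $$ (i,j)) = (\<Sum>\<omega>\<in>F. Y \<omega> $$ (i,j) - (if \<omega> = 0 then G $$ (i,j) else 0))"
      using ij Gc by (intro sum.cong) (auto simp: Z_def)
    also have "\<dots> = mat_sum n F Y $$ (i,j) - G $$ (i,j)"
      using F F0 ij by (simp add: sum_subtractf index_mat_sum)
    finally show "(\<Sum>\<omega>\<in>F. Z \<omega> $$ (i,j)) = 0" unfolding sum by simp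
  qed
  hence "Z 0 = 0\<^sub>m n n" using mode_sum_eq_0_imp_eq_0[OF F H Z] F0 by blast
  thus ?thesis using Y[OF F0] Gc unfolding Z_def is_mode_def by (auto simp: mat_eq_iff)
qed

definition mode_part :: "nat \<Rightarrow> (nat \<Rightarrow> real) \<Rightarrow> complex mat \<Rightarrow> complex \<Rightarrow> complex mat" where
  "mode_part n \<mu> N \<omega> = mat n n (\<lambda>(a,b). if complex_of_real (\<mu> a - \<mu> b) = \<omega> then N $$ (a,b) else 0)"

definition bohr_freqs :: "nat \<Rightarrow> (nat \<Rightarrow> real) \<Rightarrow> complex set" where
  "bohr_freqs n \<mu> = (\<lambda>(a,b). complex_of_real (\<mu> a - \<mu> b)) ` ({..<n} \<times> {..<n})"

lemma mode_part_carrier[simp]: "mode_part n \<mu> N \<omega> \<in> carrier_mat n n" unfolding mode_part_def by auto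

lemma finite_bohr_freqs: "finite (bohr_freqs n \<mu>)" unfolding bohr_freqs_def by auto

lemma zero_in_bohr_freqs: "0 < n \<Longrightarrow> 0 \<in> bohr_freqs n \<mu>" unfolding bohr_freqs_def by (auto simp: image_iff intro!: bexI[of _ "(0,0)"])

lemma mat_sum_mode_parts: assumes V: "V \<in> carrier_mat n n" and N: "N \<in> carrier_mat n n"
  shows "mat_sum n (bohr_freqs n \<mu>) (\<lambda>\<omega>. conj_by V (mode_part n \<mu> N \<omega>)) = conj_by V N"
proof (rule eq_matI)
  fix i j assume "i < dim_row (conj_by V N)" "j < dim_col (conj_by V N)"
  hence ij: "i < n" "j < n" using V by (auto simp: carrier_matD)
  have "mat_sum n (bohr_freqs n \<mu>) (\<lambda>\<omega>. conj_by V (mode_part n \<mu> N \<omega>)) $$ (i,j) =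
     (\<Sum>\<omega>\<in>bohr_freqs n \<mu>. \<Sum>a<n. \<Sum>b<n. (if complex_of_real (\<mu> a - \<mu> b) = \<omega> then V $$ (i,a) * N $$ (a,b) * cnj (V $$ (j,b)) else 0))"
    using ij V by (simp add: index_mat_sum index_conj_by[OF V mode_part_carrier ij], intro sum.cong refl, auto simp: mode_part_def)
  also have "\<dots> = (\<Sum>a<n. \<Sum>b<n. \<Sum>\<omega>\<in>bohr_freqs n \<mu>. (if complex_of_real (\<mu> a - \<mu> b) = \<omega> then V $$ (i,a) * N $$ (a,b) * cnj (V $$ (j,b)) else 0))"
    by (subst sum.swap, rule sum.cong[OF refl], subst sum.swap, rule refl)
  also have "\<dots> = (\<Sum>a<n. \<Sum>b<n. V $$ (i,a) * N $$ (a,b) * cnj (V $$ (j,b)))"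
  proof (intro sum.cong refl)
    fix a b assume "a \<in> {..<n}" "b \<in> {..<n}"
    hence "complex_of_real (\<mu> a - \<mu> b) \<in> bohr_freqs n \<mu>" unfolding bohr_freqs_def by auto
    thus "(\<Sum>\<omega>\<in>bohr_freqs n \<mu>. (if complex_of_real (\<mu> a - \<mu> b) = \<omega> then V $$ (i,a) * N $$ (a,b) * cnj (V $$ (j,b)) else 0)) =
       V $$ (i,a) * N $$ (a,b) * cnj (V $$ (j,b))" using finite_bohr_freqs by (simp add: sum.delta)
  qed
  also have "\<dots> = conj_by V N $$ (i,j)" by (rule index_conj_by[OF V N ij, symmetric])
  finally show "mat_sum n (bohr_freqs n \<mu>) (\<lambda>\<omega>. conj_by V (mode_part n \<mu> N \<omega>)) $$ (i,j) = conj_by V N $$ (i,j)" .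
qed (insert V, auto simp: carrier_matD)

lemma mode_part_is_mode: assumes U: "unitary_mat n V"
  shows "is_mode n (unitary_diag n V (\<lambda>a. complex_of_real (\<mu> a))) \<omega> (conj_by V (mode_part n \<mu> N \<omega>))"
proof -
  have V: "V \<in> carrier_mat n n" using unitary_matD[OF U] by auto
  let ?D = "mat_diag n (\<lambda>a. complex_of_real (\<mu> a))" and ?X = "mode_part n \<mu> N \<omega>"
  have "unitary_diag n V (\<lambda>a. complex_of_real (\<mu> a)) * conj_by V ?X - conj_by V ?X * unitary_diag n V (\<lambda>a. complex_of_real (\<mu> a)) =
     conj_by V (?D * ?X) - conj_by V (?X * ?D)" unfolding unitary_diag_conj_by using V by (simp add: conj_by_mult[OF U])
  also have "\<dots> = conj_by V (?D * ?X - ?X * ?D)"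
    using V mult_carrier_mat[OF mat_diag_dim mode_part_carrier] mult_carrier_mat[OF mode_part_carrier mat_diag_dim] by (intro conj_by_minus, auto)
  also have "?D * ?X - ?X * ?D = \<omega> \<cdot>\<^sub>m ?X"
    by (subst mat_diag_mult_left[of _ n n], simp, subst mat_diag_mult_right[of _ n], simp,
        intro eq_matI, auto simp: mode_part_def algebra_simps)
  also have "conj_by V (\<omega> \<cdot>\<^sub>m ?X) = \<omega> \<cdot>\<^sub>m conj_by V ?X" using V by (intro conj_by_smult[symmetric], auto)
  finally show ?thesis unfolding is_mode_def using V by auto
qed

lemma dephase_eq_mode_part: assumes U: "unitary_mat n V" and R: "R \<in> carrier_mat n n"
  shows "dephase (unitary_diag n V (\<lambda>a. complex_of_real (\<mu> a))) R = conj_by V (mode_part n \<mu> (mat_adjoint V * R * V) 0)"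
  unfolding dephase_unitary_diag[OF U R] mode_part_def by (intro arg_cong[where f = "conj_by V"] cong_mat refl, auto)

lemma mat_sum_mode_decomposition:
  assumes U: "unitary_mat n V" and R: "R \<in> carrier_mat n n"
  shows "mat_sum n (bohr_freqs n \<mu>) (\<lambda>\<omega>. conj_by V (mode_part n \<mu> (mat_adjoint V * R * V) \<omega>)) = R"
proof -
  have V: "V \<in> carrier_mat n n" using unitary_matD[OF U] by simp
  have "mat_adjoint V * R * V \<in> carrier_mat n n" using V R by (meson mat_adjoint_carrier mult_carrier_mat)
  thus ?thesis using mat_sum_mode_parts[OF V] conj_by_adjoint_cancel[OF U R] by simp
qed

definition quad_form :: "complex mat \<Rightarrow> (nat \<Rightarrow> complex) \<Rightarrow> nat \<Rightarrow> complex" where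
  "quad_form A y n = (\<Sum>a<n. \<Sum>b<n. A $$ (a,b) * y b * cnj (y a))"

lemma cscalar_mult_mat_vec_quad_form: assumes A: "A \<in> carrier_mat n n" and w: "w \<in> carrier_vec n"
  shows "(A *\<^sub>v w) \<bullet>c w = quad_form A (\<lambda>i. w $ i) n"
  unfolding quad_form_def using A w by (simp add: scalar_prod_def atLeast0LessThan sum_distrib_right)

lemma density_mat_quad_form_nonneg: assumes "density_mat n R" shows "0 \<le> Re (quad_form R y n)"
proof -
  have R: "R \<in> carrier_mat n n" using assms unfolding density_mat_def hermitian_mat_def by auto
  have "0 \<le> Re ((R *\<^sub>v vec n y) \<bullet>c vec n y)" using assms unfolding density_mat_def by auto
  also have "(R *\<^sub>v vec n y) \<bullet>c vec n y = quad_form R y n" using cscalar_mult_mat_vec_quad_form[OF R, of "vec n y"] unfolding quad_form_def by simp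
  finally show ?thesis .
qed

lemma density_matI: assumes "hermitian_mat n R" "\<And>y. 0 \<le> Re (quad_form R y n)" "ctrace R = 1"
  shows "density_mat n R"
  unfolding density_mat_def using assms cscalar_mult_mat_vec_quad_form[of R n] unfolding hermitian_mat_def by auto

lemma quad_form_conj_by: assumes V: "V \<in> carrier_mat n n" and X: "X \<in> carrier_mat n n"
  shows "quad_form (conj_by V X) w n = quad_form X (\<lambda>b. \<Sum>q<n. cnj (V $$ (q,b)) * w q) n"
proof -
  have "quad_form (conj_by V X) w n = (\<Sum>p<n. \<Sum>q<n. \<Sum>a<n. \<Sum>b<n. X $$ (a,b) * (cnj (V $$ (q,b)) * w q) * cnj (cnj (V $$ (p,a)) * w p))"
    unfolding quad_form_def using V X by (intro sum.cong refl, simp add: index_conj_by sum_distrib_right sum_distrib_left algebra_simps)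
  also have "\<dots> = (\<Sum>p<n. \<Sum>a<n. \<Sum>q<n. \<Sum>b<n. X $$ (a,b) * (cnj (V $$ (q,b)) * w q) * cnj (cnj (V $$ (p,a)) * w p))"
    by (rule sum.cong[OF refl], rule sum.swap)
  also have "\<dots> = (\<Sum>a<n. \<Sum>p<n. \<Sum>q<n. \<Sum>b<n. X $$ (a,b) * (cnj (V $$ (q,b)) * w q) * cnj (cnj (V $$ (p,a)) * w p))"
    by (rule sum.swap)
  also have "\<dots> = (\<Sum>a<n. \<Sum>p<n. \<Sum>b<n. \<Sum>q<n. X $$ (a,b) * (cnj (V $$ (q,b)) * w q) * cnj (cnj (V $$ (p,a)) * w p))"
    by (rule sum.cong[OF refl], rule sum.cong[OF refl], rule sum.swap)
  also have "\<dots> = (\<Sum>a<n. \<Sum>b<n. \<Sum>p<n. \<Sum>q<n. X $$ (a,b) * (cnj (V $$ (q,b)) * w q) * cnj (cnj (V $$ (p,a)) * w p))"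
    by (rule sum.cong[OF refl], rule sum.swap)
  also have "\<dots> = (\<Sum>a<n. \<Sum>b<n. \<Sum>q<n. \<Sum>p<n. X $$ (a,b) * (cnj (V $$ (q,b)) * w q) * cnj (cnj (V $$ (p,a)) * w p))"
    by (rule sum.cong[OF refl], rule sum.cong[OF refl], rule sum.swap)
  also have "\<dots> = quad_form X (\<lambda>b. \<Sum>q<n. cnj (V $$ (q,b)) * w q) n"
    unfolding quad_form_def by (intro sum.cong refl, simp add: sum_distrib_left sum_distrib_right sum_conjugate algebra_simps)
  finally show ?thesis .
qed

lemma sum_over_level_sets: fixes n :: nat and \<mu> :: "nat \<Rightarrow> real" assumes a: "a < n"
  shows "(\<Sum>E\<in>\<mu> ` {..<n}. if \<mu> a = E \<and> \<mu> b = E then t else 0) = (if \<mu> a = \<mu> b then t else (0::complex))"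
proof (cases "\<mu> a = \<mu> b")
  case True
  have "(\<Sum>E\<in>\<mu> ` {..<n}. if \<mu> a = E \<and> \<mu> b = E then t else 0) = (\<Sum>E\<in>\<mu> ` {..<n}. if E = \<mu> a then t else 0)"
    using True by (intro sum.cong refl, auto)
  also have "\<dots> = t"
  proof -
    have "\<mu> a \<in> \<mu> ` {..<n}" using a by auto
    thus ?thesis by (subst sum.delta, auto)
  qed
  finally show ?thesis using True by simp
next
  case False
  thus ?thesis by (intro trans[OF sum.neutral], auto)
qed

lemma density_mat_conj_by:
  assumes U: "unitary_mat n V" and X: "density_mat n X"
  shows "density_mat n (conj_by V X)"
proof (rule density_matI)
  have V: "V \<in> carrier_mat n n" using unitary_matD[OF U] by simp
  have Xc: "X \<in> carrier_mat n n" using X unfolding density_mat_def hermitian_mat_def by simp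
  show "hermitian_mat n (conj_by V X)" using hermitian_mat_sandwich[OF V] X unfolding density_mat_def conj_by_def by simp
  show "0 \<le> Re (quad_form (conj_by V X) y n)" for y
    unfolding quad_form_conj_by[OF V Xc] by (rule density_mat_quad_form_nonneg[OF X])
  show "ctrace (conj_by V X) = 1" using ctrace_conj_by[OF U Xc] X unfolding density_mat_def by simp
qed

text \<open>Removing the off-diagonal blocks between distinct levels of \<open>\<mu>\<close> (a pinching) keeps a state a state:
  its quadratic form splits into the quadratic forms of the blocks.\<close>

lemma density_mat_mode_part_0:
  assumes N: "density_mat n N"
  shows "density_mat n (mode_part n \<mu> N 0)"
proof (rule density_matI)
  let ?X = "mode_part n \<mu> N 0"
  have Nc: "N \<in> carrier_mat n n" and Nh: "hermitian_mat n N" and Nt: "ctrace N = 1"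
    using N unfolding density_mat_def hermitian_mat_def by auto
  have Xe: "?X $$ (a,b) = (if \<mu> a = \<mu> b then N $$ (a,b) else 0)" if "a < n" "b < n" for a b
    using that unfolding mode_part_def by auto
  show "hermitian_mat n ?X" using hermitian_matD[OF Nh] by (intro hermitian_matI) (auto simp: Xe)
  show "0 \<le> Re (quad_form ?X z n)" for z
  proof -
    have "quad_form ?X z n = (\<Sum>a<n. \<Sum>b<n. \<Sum>E\<in>\<mu> ` {..<n}. (if \<mu> a = E \<and> \<mu> b = E then N $$ (a,b) * z b * cnj (z a) else 0))"
      unfolding quad_form_def by (intro sum.cong refl, simp add: Xe sum_over_level_sets)
    also have "\<dots> = (\<Sum>E\<in>\<mu> ` {..<n}. \<Sum>a<n. \<Sum>b<n. (if \<mu> a = E \<and> \<mu> b = E then N $$ (a,b) * z b * cnj (z a) else 0))"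
      by (subst sum.swap, rule sum.cong[OF refl], subst sum.swap, rule refl)
    also have "\<dots> = (\<Sum>E\<in>\<mu> ` {..<n}. quad_form N (\<lambda>b. if \<mu> b = E then z b else 0) n)"
      unfolding quad_form_def by (intro sum.cong refl) auto
    finally show ?thesis unfolding Re_sum using density_mat_quad_form_nonneg[OF N] by (simp add: sum_nonneg)
  qed
  show "ctrace ?X = 1" unfolding ctrace_def using Nt Nc unfolding ctrace_def by (simp add: Xe mode_part_def)
qed

lemma density_mat_mode_part_zero:
  assumes U: "unitary_mat n V" and R: "density_mat n R"
  shows "density_mat n (conj_by V (mode_part n \<mu> (mat_adjoint V * R * V) 0))"
  using density_mat_conj_by[OF unitary_mat_adjoint[OF U] R]
  unfolding conj_by_adjoint by (intro density_mat_conj_by[OF U] density_mat_mode_part_0)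

lemma proj_vec_carrier[simp]: "v \<in> carrier_vec n \<Longrightarrow> proj_vec v \<in> carrier_mat n n"
  unfolding proj_vec_def by auto

lemma dim_proj_vec[simp]: "dim_row (proj_vec v) = dim_vec v" "dim_col (proj_vec v) = dim_vec v"
  unfolding proj_vec_def by auto

lemma index_proj_vec: "v \<in> carrier_vec n \<Longrightarrow> k < n \<Longrightarrow> l < n \<Longrightarrow> proj_vec v $$ (k,l) = v $ k * cnj (v $ l)"
  unfolding proj_vec_def by auto

lemma index_kron_proj_vec:
  assumes "R \<in> carrier_mat dS dS" "v \<in> carrier_vec dW" "i < dS" "j < dS" "k < dW" "l < dW"
  shows "kron R (proj_vec v) $$ (i*dW+k, j*dW+l) = R $$ (i,j) * (v $ k * cnj (v $ l))"
  using index_kron_pair_carrier[OF assms(1) proj_vec_carrier[OF assms(2)] assms(3-)]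
    index_proj_vec[OF assms(2,5,6)] by simp

lemma quad_form_kron_proj_vec:
  assumes R: "R \<in> carrier_mat dS dS" and v: "v \<in> carrier_vec dW"
  shows "quad_form (kron R (proj_vec v)) y (dS*dW) = quad_form R (\<lambda>j. \<Sum>l<dW. cnj (v $ l) * y (j*dW+l)) dS"
proof -
  let ?K = "kron R (proj_vec v)"
  have "quad_form ?K y (dS*dW) = (\<Sum>i<dS. \<Sum>k<dW. \<Sum>q<dS*dW. ?K $$ (i*dW+k, q) * y q * cnj (y (i*dW+k)))"
    unfolding quad_form_def by (rule sum_lessThan_mult)
  also have "\<dots> = (\<Sum>i<dS. \<Sum>k<dW. \<Sum>j<dS. \<Sum>l<dW. R $$ (i,j) * (v $ k * cnj (v $ l)) * y (j*dW+l) * cnj (y (i*dW+k)))"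
    by (rule sum.cong[OF refl], rule sum.cong[OF refl], subst sum_lessThan_mult,
        rule sum.cong[OF refl], rule sum.cong[OF refl], simp add: index_kron_proj_vec[OF R v])
  also have "\<dots> = (\<Sum>i<dS. \<Sum>j<dS. \<Sum>l<dW. \<Sum>k<dW. R $$ (i,j) * (v $ k * cnj (v $ l)) * y (j*dW+l) * cnj (y (i*dW+k)))"
    by (rule sum.cong[OF refl], subst sum.swap, rule sum.cong[OF refl], rule sum.swap)
  also have "\<dots> = quad_form R (\<lambda>j. \<Sum>l<dW. cnj (v $ l) * y (j*dW+l)) dS"
    unfolding quad_form_def by (intro sum.cong refl, simp add: sum_distrib_left sum_distrib_right sum_conjugate algebra_simps)
  finally show ?thesis .
qed

lemma density_mat_kron_proj_vec:
  assumes R: "density_mat dS R" and v: "v \<in> carrier_vec dW" and vv: "v \<bullet>c v = 1"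
  shows "density_mat (dS*dW) (kron R (proj_vec v))"
proof (rule density_matI)
  let ?K = "kron R (proj_vec v)"
  have Rc: "R \<in> carrier_mat dS dS" and Rt: "ctrace R = 1" and Rh: "hermitian_mat dS R"
    using R unfolding density_mat_def hermitian_mat_def by auto
  note Ke = index_kron_proj_vec[OF Rc v]
  show "hermitian_mat (dS*dW) ?K"
  proof (rule hermitian_matI)
    show "?K \<in> carrier_mat (dS*dW) (dS*dW)" using Rc v by simp
    fix p q assume pq: "p < dS*dW" "q < dS*dW"
    from index_pair_decomp[OF pq(1)] obtain i k where p: "p = i*dW+k" "i < dS" "k < dW" by blast
    from index_pair_decomp[OF pq(2)] obtain j l where q: "q = j*dW+l" "j < dS" "l < dW" by blast
    show "cnj (?K $$ (q,p)) = ?K $$ (p,q)" unfolding p(1) q(1) Ke[OF p(2) q(2) p(3) q(3)] Ke[OF q(2) p(2) q(3) p(3)]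
      using hermitian_matD[OF Rh p(2) q(2)] by simp
  qed
  show "0 \<le> Re (quad_form ?K y (dS*dW))" for y
    unfolding quad_form_kron_proj_vec[OF Rc v] by (rule density_mat_quad_form_nonneg[OF R])
  have "ctrace ?K = (\<Sum>i<dS. \<Sum>k<dW. ?K $$ (i*dW+k, i*dW+k))"
    unfolding ctrace_def using Rc v by (simp add: sum_lessThan_mult carrier_matD carrier_vecD)
  also have "\<dots> = (\<Sum>i<dS. R $$ (i,i) * (\<Sum>k<dW. v $ k * cnj (v $ k)))"
    by (intro sum.cong refl, simp add: Ke sum_distrib_left)
  also have "(\<Sum>k<dW. v $ k * cnj (v $ k)) = 1" using vv cscalar_prod_sum[OF v v] by simp
  finally show "ctrace ?K = 1" using Rt Rc unfolding ctrace_def by simp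
qed

lemma eigenvector_proj_vec_commute: assumes H: "hermitian_mat n H" and ev: "eigenvector H v e" and vv: "v \<bullet>c v = 1"
  shows "H * proj_vec v = proj_vec v * H"
proof -
  have Hc: "H \<in> carrier_mat n n" using H unfolding hermitian_mat_def by auto
  have v: "v \<in> carrier_vec n" and Hv: "H *\<^sub>v v = e \<cdot>\<^sub>v v" using ev Hc unfolding eigenvector_def by auto
  have Hvi: "(\<Sum>m<n. H $$ (k,m) * v $ m) = e * v $ k" if "k < n" for k
  proof -
    have "(H *\<^sub>v v) $ k = e * v $ k" using Hv v that by simp
    thus ?thesis using Hc v that by (simp add: scalar_prod_def atLeast0LessThan)
  qed
  have "e = e * (\<Sum>k<n. v $ k * cnj (v $ k))" using vv cscalar_prod_sum[OF v v] by simp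
  also have "\<dots> = (\<Sum>k<n. (\<Sum>m<n. H $$ (k,m) * v $ m) * cnj (v $ k))"
    by (simp add: sum_distrib_left Hvi mult.assoc)
  finally have e1: "e = (\<Sum>k<n. \<Sum>m<n. H $$ (k,m) * v $ m * cnj (v $ k))" by (simp add: sum_distrib_right)
  have "cnj e = (\<Sum>k<n. \<Sum>m<n. H $$ (m,k) * cnj (v $ m) * v $ k)"
    unfolding e1 by (simp add: sum_conjugate hermitian_matD[OF H] algebra_simps)
  also have "\<dots> = e" unfolding e1 by (subst sum.swap, simp add: algebra_simps)
  finally have er: "cnj e = e" .
  show ?thesis
  proof (rule eq_matI)
    fix k l assume "k < dim_row (proj_vec v * H)" "l < dim_col (proj_vec v * H)"
    hence kl: "k < n" "l < n" using Hc v by (auto simp: carrier_vecD)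
    have "(H * proj_vec v) $$ (k,l) = (\<Sum>m<n. H $$ (k,m) * (v $ m * cnj (v $ l)))"
      using Hc v kl by (simp add: scalar_prod_def atLeast0LessThan index_proj_vec)
    also have "\<dots> = (\<Sum>m<n. H $$ (k,m) * v $ m) * cnj (v $ l)" by (simp add: sum_distrib_right mult.assoc)
    also have "\<dots> = e * v $ k * cnj (v $ l)" using Hvi[OF kl(1)] by simp
    also have "\<dots> = v $ k * cnj (e * v $ l)" using er by (simp add: algebra_simps)
    also have "e * v $ l = (\<Sum>m<n. H $$ (l,m) * v $ m)" using Hvi[OF kl(2)] by simp
    also have "v $ k * cnj (\<Sum>m<n. H $$ (l,m) * v $ m) = (\<Sum>m<n. (v $ k * cnj (v $ m)) * H $$ (m,l))"
      by (simp add: sum_conjugate sum_distrib_left hermitian_matD[OF H] kl algebra_simps)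
    also have "\<dots> = (proj_vec v * H) $$ (k,l)"
      using Hc v kl by (simp add: scalar_prod_def atLeast0LessThan index_proj_vec)
    finally show "(H * proj_vec v) $$ (k,l) = (proj_vec v * H) $$ (k,l)" .
  qed (insert Hc v, auto)
qed

section \<open>Thermal Operations\<close>

text \<open>The extension \<open>L\<close> is the dilation formula applied to arbitrary matrices; it preserves modes
  because the dilating unitary conserves the total energy.\<close>

lemma thermal_op_covariant:
  assumes T: "thermal_op \<beta> n H T" and H: "H \<in> carrier_mat n n"
  obtains L where "\<And>\<rho>. density_mat n \<rho> \<Longrightarrow> T \<rho> = L \<rho>"
    and "\<And>\<omega> Y. is_mode n H \<omega> Y \<Longrightarrow> is_mode n H \<omega> (L Y)"
    and "\<And>(F :: complex set) f. (\<And>x. x \<in> F \<Longrightarrow> f x \<in> carrier_mat n n) \<Longrightarrow>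
           L (mat_sum n F f) = mat_sum n F (\<lambda>x. L (f x))"
proof -
  obtain dB HB U where dB: "0 < dB" and HB: "hermitian_mat dB HB" and U: "unitary_mat (n * dB) U"
    and UH: "U * (kron H (1\<^sub>m dB) + kron (1\<^sub>m n) HB) = (kron H (1\<^sub>m dB) + kron (1\<^sub>m n) HB) * U"
    and TU: "\<And>\<rho>. density_mat n \<rho> \<Longrightarrow> T \<rho> = ptrace2 dB (U * kron \<rho> (gibbs \<beta> HB) * mat_adjoint U)"
    using T unfolding thermal_op_def by blast
  let ?G = "gibbs \<beta> HB" and ?Htot = "kron H (1\<^sub>m dB) + kron (1\<^sub>m n) HB"
  define L where "L Y = ptrace2 dB (U * kron Y ?G * mat_adjoint U)" for Y
  have HBc: "HB \<in> carrier_mat dB dB" using HB unfolding hermitian_mat_def by simp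
  have G: "?G \<in> carrier_mat dB dB" "HB * ?G = ?G * HB" using gibbs_carrier_commute[OF HB] by auto
  have Uc: "U \<in> carrier_mat (n * dB) (n * dB)" "mat_adjoint U \<in> carrier_mat (n * dB) (n * dB)"
    using unitary_matD[OF U] by auto
  have Htot: "?Htot \<in> carrier_mat (n * dB) (n * dB)" using H HBc by auto
  have L_mode: "is_mode n H \<omega> (L Y)" if "is_mode n H \<omega> Y" for \<omega> Y
    unfolding L_def by (rule ptrace2_mode[OF dB H HBc conj_unitary_mode[OF U Htot UH kron_mode[OF H HBc that G]]])
  have L_sum: "L (mat_sum n F f) = mat_sum n F (\<lambda>x. L (f x))"
    if f: "\<And>x. x \<in> F \<Longrightarrow> f x \<in> carrier_mat n n" for F :: "complex set" and f
  proof -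
    have fG: "\<And>x. x \<in> F \<Longrightarrow> kron (f x) ?G \<in> carrier_mat (n * dB) (n * dB)" using f G by auto
    have "U * kron (mat_sum n F f) ?G * mat_adjoint U = mat_sum (n * dB) F (\<lambda>x. U * kron (f x) ?G * mat_adjoint U)"
      using Uc fG by (simp add: kron_mat_sum[OF f G(1)] mult_mat_sum mat_sum_mult)
    moreover have "\<And>x. x \<in> F \<Longrightarrow> U * kron (f x) ?G * mat_adjoint U \<in> carrier_mat (n * dB) (n * dB)"
      using Uc fG by (meson mult_carrier_mat)
    ultimately show ?thesis unfolding L_def by (simp add: ptrace2_mat_sum[OF dB])
  qed
  show ?thesis
    by (rule that[OF _ L_mode L_sum]) (simp add: TU L_def)
qed

lemma thermal_op_zero_mode:
  assumes T: "thermal_op \<beta> n H T" and H: "H \<in> carrier_mat n n"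
    and F: "finite F" "0 \<in> F" and X: "\<And>\<omega>. \<omega> \<in> F \<Longrightarrow> is_mode n H \<omega> (X \<omega>)"
    and dens: "density_mat n (mat_sum n F X)" "density_mat n (X 0)"
    and G: "is_mode n H 0 G" and TX: "T (mat_sum n F X) = G"
  shows "T (X 0) = G"
proof -
  obtain L where TL: "\<And>\<rho>. density_mat n \<rho> \<Longrightarrow> T \<rho> = L \<rho>"
    and L_mode: "\<And>\<omega> Y. is_mode n H \<omega> Y \<Longrightarrow> is_mode n H \<omega> (L Y)"
    and L_sum: "\<And>(F :: complex set) f. (\<And>x. x \<in> F \<Longrightarrow> f x \<in> carrier_mat n n) \<Longrightarrow>
                  L (mat_sum n F f) = mat_sum n F (\<lambda>x. L (f x))"
    using thermal_op_covariant[OF T H] by blast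
  have "mat_sum n F (\<lambda>\<omega>. L (X \<omega>)) = L (mat_sum n F X)"
    using X unfolding is_mode_def by (intro L_sum[symmetric]) blast
  also have "\<dots> = G" using TL[OF dens(1)] TX by simp
  finally have "L (X 0) = G" using zero_mode_of_mode_sum[OF F H _ G, of "\<lambda>\<omega>. L (X \<omega>)"] L_mode X by blast
  thus ?thesis using TL[OF dens(2)] by simp
qed

theorem mainTheorem12:
  fixes dS dW :: nat and \<beta> :: real and HS HW \<rho>S \<sigma>W :: "complex mat"
    and v0 :: "complex vec" and e0 :: complex
    and T :: "complex mat \<Rightarrow> complex mat"
  assumes "0 < \<beta>" and "0 < dS"
    and "hermitian_mat dS HS" and "hermitian_mat dW HW"
    and "eigenvector HW v0 e0" and "v0 \<bullet>c v0 = 1"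
    and "density_mat dS \<rho>S"
    and "density_mat dW \<sigma>W" and "\<sigma>W * HW = HW * \<sigma>W"
    and "thermal_op \<beta> (dS * dW) (kron HS (1\<^sub>m dW) + kron (1\<^sub>m dS) HW) T"
    and "T (kron \<rho>S (proj_vec v0)) = kron (gibbs \<beta> HS) \<sigma>W"
  shows "T (kron (dephase HS \<rho>S) (proj_vec v0)) = kron (gibbs \<beta> HS) \<sigma>W"
proof -
  let ?HX = "kron HS (1\<^sub>m dW) + kron (1\<^sub>m dS) HW" and ?P = "proj_vec v0"
  have HS: "HS \<in> carrier_mat dS dS" and HW: "HW \<in> carrier_mat dW dW" and \<rho>: "\<rho>S \<in> carrier_mat dS dS"
    and \<sigma>: "\<sigma>W \<in> carrier_mat dW dW"
    using assms(3,4,7,8) unfolding density_mat_def hermitian_mat_def by auto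
  have v0: "v0 \<in> carrier_vec dW" using assms(5) HW unfolding eigenvector_def by auto
  obtain V \<mu> where V: "unitary_mat dS V" and HS_eq: "HS = unitary_diag dS V (\<lambda>a. complex_of_real (\<mu> a))"
    using hermitian_spectral_decomposition[OF assms(3)] unfolding unitary_diag_def by blast
  have HX: "?HX \<in> carrier_mat (dS * dW) (dS * dW)" using HS HW by auto
  define X where "X \<omega> = kron (conj_by V (mode_part dS \<mu> (mat_adjoint V * \<rho>S * V) \<omega>)) ?P" for \<omega>
  have X_mode: "is_mode (dS * dW) ?HX \<omega> (X \<omega>)" for \<omega>
    unfolding X_def using kron_mode[OF HS HW _ _ eigenvector_proj_vec_commute[OF assms(4,5,6)]]
      mode_part_is_mode[OF V] v0 HS_eq by simp
  have decomp: "kron \<rho>S ?P = mat_sum (dS * dW) (bohr_freqs dS \<mu>) X"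
    unfolding X_def using unitary_matD[OF V] v0
    by (subst (1) mat_sum_mode_decomposition[OF V \<rho>, of \<mu>, symmetric]) (rule kron_mat_sum, auto)
  have "T (X 0) = kron (gibbs \<beta> HS) \<sigma>W"
  proof (rule thermal_op_zero_mode[OF assms(10) HX finite_bohr_freqs zero_in_bohr_freqs[OF assms(2)] X_mode])
    show "density_mat (dS * dW) (mat_sum (dS * dW) (bohr_freqs dS \<mu>) X)"
      unfolding decomp[symmetric] by (rule density_mat_kron_proj_vec[OF assms(7) v0 assms(6)])
    show "density_mat (dS * dW) (X 0)"
      unfolding X_def by (rule density_mat_kron_proj_vec[OF density_mat_mode_part_zero[OF V assms(7)] v0 assms(6)])
    show "is_mode (dS * dW) ?HX 0 (kron (gibbs \<beta> HS) \<sigma>W)"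
      using gibbs_carrier_commute[OF assms(3)] HS HW \<sigma> assms(9) by (intro kron_mode commute_imp_zero_mode) auto
    show "T (mat_sum (dS * dW) (bohr_freqs dS \<mu>) X) = kron (gibbs \<beta> HS) \<sigma>W"
      unfolding decomp[symmetric] by (rule assms(11))
  qed
  thus ?thesis unfolding X_def HS_eq by (simp add: dephase_eq_mode_part[OF V \<rho>])
qed

end
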